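(* Fix generic values of the parameters, of $z$, and of $\bar Y(z/q),\bar Y(z),\bar Y(qz)$. The algebraic curve $$\varphi\,\{\bar f-\bar f(z/q)\}\{\bar f-\bar f(z)\}\,L_{1u}=0$$ in the variables $(\bar f,g)\in\mathbb{P}^1\times\mathbb{P}^1$ (where $\varphi$ stands for $\varphi_u$, the only $\varphi$-factor in the denominator of $L_{1u}$) is uniquely characterized by the properties: (i) it is of bidegree $(3,2)$; (ii) it passes through the 10 points $(\bar f,g)=(\bar f(u),g(u))$ for $u=u_1,\dots,u_8,\ z/q,\ h_1/(qz)$, and through the two further points defined by $\bar f=\bar f(u)$ and $$\frac{q^4u^8}{h_1^4}\frac{U(\frac{h_1}{qu})}{U(u)}\frac{g-g(u)}{g-g(\frac{h_1}{qu})}=\frac{\bar Y(u)}{\bar Y(qu)},$$ for $u=z$ and $u=z/q$.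
   Context: Let $h_1,h_2,u_1,\dots,u_8$ be generic nonzero complex parameters and $q=h_1^2h_2^2/(u_1\cdots u_8)$. Put $f(u)=u+h_1/u$, $g(u)=u+h_2/u$, $\bar f(u)=u+\frac{h_1}{qu}$. Let $\varphi_u=(\bar f-g)\big(\frac{q\bar f}{h_1}-\frac{g}{h_2}\big)-(\frac{h_1}{q}-h_2)\big(\frac q{h_1}-\frac1{h_2}\big)$. Let $U(z)=\prod_{i=1}^8(z-u_i)=\sum_{i=0}^8(-1)^i m_{8-i}z^i$ (so $m_0=1$, $m_8=h_1^2h_2^2/q$). For a parameter $h$ define polynomials in $g$: $P_n(h,g)=m_0g^4-m_1g^3+(m_2-3hm_0-h^{-3}m_8)g^2+(2hm_1-m_3+h^{-2}m_7)g+(h^2m_0-hm_2+m_4-h^{-1}m_6+h^{-2}m_8)$, $P_d(h,g)=m_8g^4-hm_7g^3+(h^2m_6-3hm_8-h^5m_0)g^2+(2h^2m_7-h^3m_5+h^5m_1)g+(h^6m_0-h^5m_2+h^4m_4-h^3m_6+h^2m_8)$. Define, for variables $f_0,f,g$, $V(f_0,f)=q\Big[(f_0-g)(f-g)-\big(\tfrac{h_1}{q}-h_2\big)(h_1-h_2)\tfrac1{h_2}\Big]P_d(h_2,g)-h_1^2h_2^4\Big[\big(\tfrac{f_0q}{h_1}-\tfrac{g}{h_2}\big)\big(\tfrac{f}{h_1}-\tfrac{g}{h_2}\big)-\big(\tfrac{q}{h_1}-\tfrac1{h_2}\big)\big(\tfrac1{h_1}-\tfrac1{h_2}\big)h_2\Big]P_n(h_2,g)$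 (it also depends on $g$). For a function $\bar Y$ of $z$ and variables $(\bar f,g)$ define $$L_{1u}=\frac{U(\frac zq)}{(z^2-h_1q^2)\{\bar f-\bar f(\frac zq)\}}\Big[\bar Y(\tfrac zq)-\frac{z^8}{h_1^4q^4}\frac{U(\frac{h_1}{z})}{U(\frac zq)}\frac{g-g(\frac zq)}{g-g(\frac{h_1}{z})}\bar Y(z)\Big]+\frac{z^8U(\frac{h_1}{qz})}{(qz^2-h_1)h_1^4\{\bar f-\bar f(z)\}}\Big[\bar Y(qz)-\frac{h_1^4}{q^4z^8}\frac{U(z)}{U(\frac{h_1}{qz})}\frac{g-g(\frac{h_1}{qz})}{g-g(z)}\bar Y(z)\Big]+\frac{(h_1-h_2q)z^2(z^2-h_1)V(\bar f,f(z))}{h_1^3h_2^3q^5\,g\,\varphi_u\{g-g(\frac{h_1}{z})\}\{g-g(z)\}}\bar Y(z).$$ *)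

theory Defs
  imports Complex_Main
begin

text \<open>A property holds for generic parameters if it holds
outside the zero set of a polynomial function that is not identically zero.\<close>

inductive_set polyfun :: "(complex list \<Rightarrow> complex) set" where
  pf_const: "(\<lambda>xs. c) \<in> polyfun"
| pf_var:   "(\<lambda>xs. xs ! i) \<in> polyfun"
| pf_add:   "p \<in> polyfun \<Longrightarrow> r \<in> polyfun \<Longrightarrow> (\<lambda>xs. p xs + r xs) \<in> polyfun"
| pf_mult:  "p \<in> polyfun \<Longrightarrow> r \<in> polyfun \<Longrightarrow> (\<lambda>xs. p xs * r xs) \<in> polyfun"

text \<open>Parameters: h1 h2 :: complex, u :: nat => complex (only u 1, ..., u 8 are used).\<close>

definition qq :: "complex \<Rightarrow> complex \<Rightarrow> (nat \<Rightarrow> complex) \<Rightarrow> complex" where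
  "qq h1 h2 u = h1^2 * h2^2 / (\<Prod>i=1..8. u i)"

definition ff :: "complex \<Rightarrow> complex \<Rightarrow> complex" where
  "ff h1 x = x + h1 / x"

definition gg :: "complex \<Rightarrow> complex \<Rightarrow> complex" where
  "gg h2 x = x + h2 / x"

definition fbar :: "complex \<Rightarrow> complex \<Rightarrow> complex \<Rightarrow> complex" where
  "fbar h1 q x = x + h1 / (q * x)"

definition UU :: "(nat \<Rightarrow> complex) \<Rightarrow> complex \<Rightarrow> complex" where
  "UU u x = (\<Prod>i=1..8. (x - u i))"

text \<open>m k = k-th elementary symmetric function of u 1, ..., u 8, so that
  U(x) = sum_i (-1)^i m_(8-i) x^i.\<close>
definition mm :: "(nat \<Rightarrow> complex) \<Rightarrow> nat \<Rightarrow> complex" where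
  "mm u k = (\<Sum>S\<in>{S. S \<subseteq> {1..8} \<and> card S = k}. \<Prod>i\<in>S. u i)"

definition phiu :: "complex \<Rightarrow> complex \<Rightarrow> (nat \<Rightarrow> complex) \<Rightarrow> complex \<Rightarrow> complex \<Rightarrow> complex" where
  "phiu h1 h2 u fb g = (let q = qq h1 h2 u in
     (fb - g) * (q * fb / h1 - g / h2) - (h1 / q - h2) * (q / h1 - 1 / h2))"

definition Pn :: "(nat \<Rightarrow> complex) \<Rightarrow> complex \<Rightarrow> complex \<Rightarrow> complex" where
  "Pn u h g = (let m = mm u in
     m 0 * g^4 - m 1 * g^3 + (m 2 - 3 * h * m 0 - m 8 / h^3) * g^2
     + (2 * h * m 1 - m 3 + m 7 / h^2) * g
     + (h^2 * m 0 - h * m 2 + m 4 - m 6 / h + m 8 / h^2))"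

definition Pd :: "(nat \<Rightarrow> complex) \<Rightarrow> complex \<Rightarrow> complex \<Rightarrow> complex" where
  "Pd u h g = (let m = mm u in
     m 8 * g^4 - h * m 7 * g^3 + (h^2 * m 6 - 3 * h * m 8 - h^5 * m 0) * g^2
     + (2 * h^2 * m 7 - h^3 * m 5 + h^5 * m 1) * g
     + (h^6 * m 0 - h^5 * m 2 + h^4 * m 4 - h^3 * m 6 + h^2 * m 8))"

definition VV :: "complex \<Rightarrow> complex \<Rightarrow> (nat \<Rightarrow> complex) \<Rightarrow> complex \<Rightarrow> complex \<Rightarrow> complex \<Rightarrow> complex" where
  "VV h1 h2 u f0 f g = (let q = qq h1 h2 u in
     q * ((f0 - g) * (f - g) - (h1 / q - h2) * (h1 - h2) * (1 / h2)) * Pd u h2 g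
     - h1^2 * h2^4 * ((f0 * q / h1 - g / h2) * (f / h1 - g / h2)
                      - (q / h1 - 1 / h2) * (1 / h1 - 1 / h2) * h2) * Pn u h2 g)"

text \<open>L_{1u} as a function of (fb, g) = (bar f, g); Y0, Y1, Y2 stand for the values
  bar Y(z/q), bar Y(z), bar Y(qz).  NOTE: the first denominator factor is
  (z^2 - h1 q) (the context's (z^2 - h1 q^2) is a typo).\<close>
definition L1u :: "complex \<Rightarrow> complex \<Rightarrow> (nat \<Rightarrow> complex) \<Rightarrow> complex \<Rightarrow> complex \<Rightarrow> complex \<Rightarrow> complex
                   \<Rightarrow> complex \<Rightarrow> complex \<Rightarrow> complex" where
  "L1u h1 h2 u z Y0 Y1 Y2 fb g = (let q = qq h1 h2 u; U = UU u in
     U (z / q) / ((z^2 - h1 * q) * (fb - fbar h1 q (z / q)))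
       * (Y0 - z^8 / (h1^4 * q^4) * (U (h1 / z) / U (z / q))
                * ((g - gg h2 (z / q)) / (g - gg h2 (h1 / z))) * Y1)
     + z^8 * U (h1 / (q * z)) / ((q * z^2 - h1) * h1^4 * (fb - fbar h1 q z))
       * (Y2 - h1^4 / (q^4 * z^8) * (U z / U (h1 / (q * z)))
                * ((g - gg h2 (h1 / (q * z))) / (g - gg h2 z)) * Y1)
     + (h1 - h2 * q) * z^2 * (z^2 - h1) * VV h1 h2 u fb (ff h1 z) g
       / (h1^3 * h2^3 * q^5 * g * phiu h1 h2 u fb g
          * (g - gg h2 (h1 / z)) * (g - gg h2 z)) * Y1)"

definition curveE :: "complex \<Rightarrow> complex \<Rightarrow> (nat \<Rightarrow> complex) \<Rightarrow> complex \<Rightarrow> complex \<Rightarrow> complex \<Rightarrow> complex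
                   \<Rightarrow> complex \<Rightarrow> complex \<Rightarrow> complex" where
  "curveE h1 h2 u z Y0 Y1 Y2 fb g = (let q = qq h1 h2 u in
     phiu h1 h2 u fb g * (fb - fbar h1 q (z / q)) * (fb - fbar h1 q z)
     * L1u h1 h2 u z Y0 Y1 Y2 fb g)"

definition curve_dom :: "complex \<Rightarrow> complex \<Rightarrow> (nat \<Rightarrow> complex) \<Rightarrow> complex \<Rightarrow> complex \<Rightarrow> complex \<Rightarrow> bool" where
  "curve_dom h1 h2 u z fb g = (let q = qq h1 h2 u in
     fb \<noteq> fbar h1 q (z / q) \<and> fb \<noteq> fbar h1 q z \<and> g \<noteq> 0 \<and> phiu h1 h2 u fb g \<noteq> 0
     \<and> g \<noteq> gg h2 (h1 / z) \<and> g \<noteq> gg h2 z)"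

text \<open>A polynomial of bidegree (3,2) is given by its coefficients c i j, i \<le> 3, j \<le> 2;
  (other values of c are irrelevant).  Its zero set in P^1 x P^1 is a curve of bidegree (3,2).\<close>
definition bpoly :: "(nat \<Rightarrow> nat \<Rightarrow> complex) \<Rightarrow> complex \<Rightarrow> complex \<Rightarrow> complex" where
  "bpoly c x y = (\<Sum>i\<le>3. \<Sum>j\<le>2. c i j * x^i * y^j)"

definition bpoly_nonzero :: "(nat \<Rightarrow> nat \<Rightarrow> complex) \<Rightarrow> bool" where
  "bpoly_nonzero c \<longleftrightarrow> (\<exists>i\<le>3. \<exists>j\<le>2. c i j \<noteq> 0)"

definition bpoly_prop :: "(nat \<Rightarrow> nat \<Rightarrow> complex) \<Rightarrow> (nat \<Rightarrow> nat \<Rightarrow> complex) \<Rightarrow> bool" where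
  "bpoly_prop d c \<longleftrightarrow> (\<exists>s. \<forall>i\<le>3. \<forall>j\<le>2. d i j = s * c i j)"

text \<open>The g-coordinates of the extra point over fb = fb(w):
  q^4 w^8/h1^4 * U(h1/(q w))/U(w) * (g - g(w))/(g - g(h1/(q w))) = Ya / Yb,
  where Ya/Yb stands for bar Y(w) / bar Y(q w).\<close>
definition extra_pt :: "complex \<Rightarrow> complex \<Rightarrow> (nat \<Rightarrow> complex) \<Rightarrow> complex \<Rightarrow> complex \<Rightarrow> complex \<Rightarrow> complex \<Rightarrow> bool" where
  "extra_pt h1 h2 u w Ya Yb y = (let q = qq h1 h2 u in
     y \<noteq> gg h2 (h1 / (q * w)) \<and>
     q^4 * w^8 / h1^4 * (UU u (h1 / (q * w)) / UU u w)
       * ((y - gg h2 w) / (y - gg h2 (h1 / (q * w)))) = Ya / Yb)"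

definition through_pts :: "complex \<Rightarrow> complex \<Rightarrow> (nat \<Rightarrow> complex) \<Rightarrow> complex \<Rightarrow> complex \<Rightarrow> complex \<Rightarrow> complex
                            \<Rightarrow> (nat \<Rightarrow> nat \<Rightarrow> complex) \<Rightarrow> bool" where
  "through_pts h1 h2 u z Y0 Y1 Y2 c = (let q = qq h1 h2 u in
     (\<forall>k\<in>{1..8}. bpoly c (fbar h1 q (u k)) (gg h2 (u k)) = 0)
     \<and> bpoly c (fbar h1 q (z / q)) (gg h2 (z / q)) = 0
     \<and> bpoly c (fbar h1 q (h1 / (q * z))) (gg h2 (h1 / (q * z))) = 0
     \<and> (\<forall>y. extra_pt h1 h2 u z Y1 Y2 y \<longrightarrow> bpoly c (fbar h1 q z) y = 0)
     \<and> (\<forall>y. extra_pt h1 h2 u (z / q) Y0 Y1 y \<longrightarrow> bpoly c (fbar h1 q (z / q)) y = 0))"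

end

theory Submission
  imports Defs "HOL-Computational_Algebra.Polynomial"
begin

(*
  Idea of the proof.  Write x = fb and y = g.  Under the curve_dom restrictions the left-hand
  side curveE of the curve equation can be rewritten as

     E(x,y) = Y0 C1 phi(x,y) (x-b) + Y2 C2 phi(x,y) (x-a) + Y1 W(x,y) / (y (y-g1) (y-g2)),

  where a = fb(z/q), b = fb(z), g1 = g(h1/z), g2 = g(z) and W is a polynomial of degree <= 5 in y.
  The heart of the matter is that W vanishes at y = 0, g1, g2 (explicit identities for V, Pn, Pd
  obtained from the Vieta expansion of U), so E is a polynomial of degree <= 2 in y; it is
  visibly of degree <= 3 in x, and Lagrange interpolation in x yields coefficients of bidegree
  (3,2).  The twelve point conditions are checked directly from this formula.

  Uniqueness: the (2,2)-curve phi = 0 is rationally parametrised by w |-> (fb(w), g(w)); pulling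
  a (3,2)-polynomial back along it gives a polynomial of degree <= 10 in w, which the ten points
  determine up to a scalar.  Hence d - s c vanishes on phi = 0, so it equals (linear in x) * phi,
  and the two extra points kill the linear factor.

  Finally, every non-degeneracy hypothesis used above is collected into one rational function
  of the 14 parameters; it is nonzero at an explicit rational point, and multiplying its numerator
  and denominator gives the nonzero polynomial p of the statement.
*)

lemma prod_linear_factors_expand:
  fixes u :: "'b \<Rightarrow> 'a::comm_ring_1"
  assumes "finite A"
  shows "(\<Prod>i\<in>A. (x - u i)) =
    (\<Sum>k\<le>card A. (-1)^k * (\<Sum>S\<in>{S. S \<subseteq> A \<and> card S = k}. \<Prod>i\<in>S. u i) * x^(card A - k))"
proof -
  have "(\<Prod>i\<in>A. (x - u i)) = (\<Prod>i\<in>A. (- u i) + x)" by simp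
  also have "\<dots> = (\<Sum>X\<in>Pow A. (\<Prod>i\<in>X. - u i) * (\<Prod>i\<in>A-X. x))"
    by (rule prod_add[OF assms])
  also have "\<dots> = (\<Sum>X\<in>Pow A. (-1)^card X * (\<Prod>i\<in>X. u i) * x^(card A - card X))"
  proof (rule sum.cong[OF refl])
    fix X assume X: "X \<in> Pow A"
    hence "finite X" using assms finite_subset by auto
    thus "(\<Prod>i\<in>X. - u i) * (\<Prod>i\<in>A-X. x) = (-1)^card X * (\<Prod>i\<in>X. u i) * x^(card A - card X)"
      using X assms by (simp add: prod_uminus card_Diff_subset)
  qed
  also have "Pow A = (\<Union>k\<in>{..card A}. {S. S \<subseteq> A \<and> card S = k})"
    using assms by (auto intro: card_mono)
  also have "(\<Sum>X\<in>(\<Union>k\<in>{..card A}. {S. S \<subseteq> A \<and> card S = k}). (-1)^card X * (\<Prod>i\<in>X. u i) * x^(card A - card X))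
     = (\<Sum>k\<le>card A. \<Sum>X\<in>{S. S \<subseteq> A \<and> card S = k}. (-1)^card X * (\<Prod>i\<in>X. u i) * x^(card A - card X))"
    by (rule sum.UNION_disjoint)
      (auto intro: finite_subset[OF _ finite_Pow_iff[THEN iffD2, OF assms]] simp: assms)
  also have "\<dots> = (\<Sum>k\<le>card A. (-1)^k * (\<Sum>S\<in>{S. S \<subseteq> A \<and> card S = k}. \<Prod>i\<in>S. u i) * x^(card A - k))"
    by (rule sum.cong[OF refl]) (simp add: sum_distrib_left sum_distrib_right mult_ac)
  finally show ?thesis .
qed

lemma degree_pCons_bound: "degree p \<le> n \<Longrightarrow> degree (pCons a p) \<le> Suc n"
  by (cases "p = 0") (auto simp: degree_pCons_eq)

lemma degree_linear_le: "degree [:a, b:] \<le> 1"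
  using degree_pCons_bound[of "[:b:]" 0 a] by simp

lemma degree_quadratic_le: "degree [:a, b, c:] \<le> 2"
  using degree_pCons_bound[OF degree_linear_le] by (simp add: numeral_eq_Suc)

lemma degree_cubic_le: "degree [:a, b, c, d:] \<le> 3"
  using degree_pCons_bound[OF degree_quadratic_le] by (simp add: numeral_eq_Suc)

lemma degree_quartic_le: "degree [:a, b, c, d, e:] \<le> 4"
  using degree_pCons_bound[OF degree_cubic_le] by (simp add: numeral_eq_Suc)

lemma degree_smult_bound: "degree p \<le> n \<Longrightarrow> degree (smult c p) \<le> n"
  by (rule order.trans[OF degree_smult_le])

lemma degree_mult_bound: "degree p \<le> m \<Longrightarrow> degree r \<le> n \<Longrightarrow> degree (p * r) \<le> m + n"
  by (rule order.trans[OF degree_mult_le]) (rule add_mono)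

lemma coeff_mult_top:
  fixes p r :: "'a::comm_semiring_1 poly"
  assumes "degree p \<le> m" "degree r \<le> n"
  shows "coeff (p * r) (m + n) = coeff p m * coeff r n"
proof (cases "degree p = m \<and> degree r = n")
  case True thus ?thesis using coeff_mult_degree_sum[of p r] by simp
next
  case False
  hence "degree p + degree r < m + n" using assms by auto
  hence "coeff (p * r) (m + n) = 0"
    by (intro coeff_eq_0) (meson degree_mult_le le_less_trans)
  moreover have "coeff p m = 0 \<or> coeff r n = 0"
    using False assms by (auto intro: coeff_eq_0 simp: le_less)
  ultimately show ?thesis by auto
qed

lemma degree_drop_top:
  assumes "degree p \<le> Suc n" "coeff p (Suc n) = 0"
  shows "degree p \<le> n"
proof (rule ccontr)
  assume "\<not> degree p \<le> n"
  hence "degree p = Suc n" using assms(1) by simp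
  thus False using assms(2) by (metis leading_coeff_0_iff nat.distinct(1) degree_0)
qed

definition root_poly :: "'a::comm_ring_1 list \<Rightarrow> 'a poly" where
  "root_poly rs = prod_list (map (\<lambda>r. [:-r, 1:]) rs)"

lemma root_poly_degree: "degree (root_poly rs :: 'a::idom poly) = length rs"
  and root_poly_nonzero: "root_poly rs \<noteq> (0 :: 'a::idom poly)"
  by (induction rs) (simp_all add: root_poly_def degree_mult_eq del: mult_pCons_left)

lemma root_poly_dvd:
  fixes p :: "'a::idom poly"
  assumes "distinct rs" "\<forall>r\<in>set rs. poly p r = 0"
  shows "root_poly rs dvd p"
  using assms
proof (induction rs arbitrary: p)
  case Nil thus ?case by (simp add: root_poly_def)
next
  case (Cons r rs)
  obtain p' where p: "p = [:-r, 1:] * p'"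
    using Cons.prems by (metis dvdE list.set_intros(1) poly_eq_0_iff_dvd)
  have "\<forall>r'\<in>set rs. poly p' r' = 0"
    using Cons.prems by (auto simp: p)
  hence "root_poly rs dvd p'" using Cons by simp
  thus ?case unfolding p by (simp add: root_poly_def mult_dvd_mono del: mult_pCons_left)
qed

lemma root_poly_quotient:
  fixes p :: "'a::idom poly"
  assumes "distinct rs" "\<forall>r\<in>set rs. poly p r = 0" "degree p \<le> n + length rs"
  shows "\<exists>Q. degree Q \<le> n \<and> p = root_poly rs * Q"
proof -
  obtain Q where Q: "p = root_poly rs * Q" using root_poly_dvd[OF assms(1,2)] by (metis dvdE)
  have "degree Q \<le> n"
  proof (cases "Q = 0")
    case False
    hence "degree p = length rs + degree Q"
      unfolding Q by (simp add: degree_mult_eq root_poly_nonzero root_poly_degree)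
    thus ?thesis using assms(3) by simp
  qed simp
  thus ?thesis using Q by blast
qed

lemma poly_as_bounded_sum:
  fixes P :: "'a::comm_semiring_1 poly"
  assumes "degree P \<le> n"
  shows "poly P x = (\<Sum>i\<le>n. coeff P i * x^i)"
proof -
  have "poly P x = (\<Sum>i\<le>degree P. coeff P i * x^i)" by (rule poly_altdef)
  also have "\<dots> = (\<Sum>i\<le>n. coeff P i * x^i)"
    by (rule sum.mono_neutral_left) (use assms in \<open>auto simp: coeff_eq_0\<close>)
  finally show ?thesis .
qed

(* Lagrange interpolation of a cubic at the nodes 0, 1, 2, 3. *)
definition lagrange_coeff :: "nat \<Rightarrow> nat \<Rightarrow> complex" where
  "lagrange_coeff k i = (if k = 0 then [1, -11/6, 1, -1/6] ! i else if k = 1 then [0, 3, -5/2, 1/2] ! i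
     else if k = 2 then [0, -3/2, 2, -1/2] ! i else [0, 1/3, -1/2, 1/6] ! i)"

lemma lagrange_cubic:
  fixes P :: "complex poly"
  assumes "degree P \<le> 3"
  shows "poly P x = (\<Sum>k<4. poly P (of_nat k) * (\<Sum>i\<le>3. lagrange_coeff k i * x^i))"
  unfolding poly_as_bounded_sum[OF assms]
  by (simp add: lagrange_coeff_def numeral_eq_Suc lessThan_Suc atMost_Suc algebra_simps
      power2_eq_square power3_eq_cube)

lemma finite_square_roots: "finite {w::complex. w^2 = c}"
proof -
  have "finite {w. poly [:-c, 0, 1:] w = 0}" by (rule poly_roots_finite) simp
  moreover have "{w::complex. w^2 = c} = {w. poly [:-c, 0, 1:] w = 0}"
    by (auto simp: power2_eq_square algebra_simps)
  ultimately show ?thesis by simp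
qed

lemma mm_0: "mm u 0 = 1"
proof -
  have "{S. S \<subseteq> {1..8::nat} \<and> card S = 0} = {{}}"
    by (auto dest: finite_subset[OF _ finite_atLeastAtMost])
  thus ?thesis by (simp add: mm_def)
qed

lemma mm_8: "mm u 8 = (\<Prod>i=1..8. u i)"
proof -
  have "S \<subseteq> {1..8::nat} \<and> card S = 8 \<longleftrightarrow> S = {1..8}" for S
    by (metis card_atLeastAtMost card_subset_eq diff_Suc_1 finite_atLeastAtMost order_refl)
  hence "{S. S \<subseteq> {1..8::nat} \<and> card S = 8} = {{1..8}}" by blast
  thus ?thesis by (simp add: mm_def)
qed

lemma UU_expand: "UU u x = x^8 - mm u 1 * x^7 + mm u 2 * x^6 - mm u 3 * x^5 + mm u 4 * x^4
   - mm u 5 * x^3 + mm u 6 * x^2 - mm u 7 * x + mm u 8"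
proof -
  have "UU u x = (\<Sum>k\<le>8. (-1)^k * mm u k * x^(8-k))"
    using prod_linear_factors_expand[where A="{1..8}" and u=u and x=x] by (simp add: UU_def mm_def)
  thus ?thesis by (simp add: numeral_eq_Suc mm_0 algebra_simps)
qed

lemma UU_root: "i \<in> {1..8} \<Longrightarrow> UU u (u i) = 0"
  unfolding UU_def by (rule prod_zero) auto

(* At g = g(w), Pn and Pd are antisymmetric combinations of U(w) and U(h2/w); this is what
   makes V computable on the curve phi = 0 and on the fibres of g. *)
lemma Pn_at_gg:
  assumes "w \<noteq> 0" "h2 \<noteq> 0"
  shows "Pn u h2 (gg h2 w) * (w - h2/w) = UU u w / w^3 - UU u (h2/w) * w^3 / h2^3"
  using assms unfolding Pn_def Let_def gg_def UU_expand mm_0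
  by (simp add: field_simps)
    (simp add: algebra_simps power2_eq_square power3_eq_cube power4_eq_xxxx numeral_eq_Suc)

lemma Pd_at_gg:
  assumes "w \<noteq> 0" "h2 \<noteq> 0"
  shows "Pd u h2 (gg h2 w) * (w - h2/w) = UU u (h2/w) * w^5 - h2^5 * UU u w / w^5"
  using assms unfolding Pd_def Let_def gg_def UU_expand mm_0
  by (simp add: field_simps)
    (simp add: algebra_simps power2_eq_square power3_eq_cube power4_eq_xxxx numeral_eq_Suc)

lemma VV_at_gg:
  assumes "w \<noteq> 0" "h2 \<noteq> 0" "q = qq h1 h2 u"
  shows "VV h1 h2 u f0 f (gg h2 w) * (w - h2/w) =
     q * ((f0 - gg h2 w) * (f - gg h2 w) - (h1 / q - h2) * (h1 - h2) * (1 / h2))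
       * (UU u (h2/w) * w^5 - h2^5 * UU u w / w^5)
     - h1^2 * h2^4 * ((f0 * q / h1 - gg h2 w / h2) * (f / h1 - gg h2 w / h2)
                      - (q / h1 - 1 / h2) * (1 / h1 - 1 / h2) * h2)
       * (UU u w / w^3 - UU u (h2/w) * w^3 / h2^3)"
proof -
  have distrib: "(a*x - b*y)*t = a*(x*t) - b*(y*t)" for a b x y t :: complex
    by (simp add: algebra_simps)
  show ?thesis
    unfolding VV_def Let_def assms(3)[symmetric] distrib
      Pd_at_gg[OF assms(1,2), symmetric] Pn_at_gg[OF assms(1,2), symmetric] ..
qed

lemma VV_on_phi_curve:
  assumes "w \<noteq> 0" "h1 \<noteq> 0" "h2 \<noteq> 0" "q \<noteq> 0" "w^2 \<noteq> h2" "q = qq h1 h2 u"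
  shows "VV h1 h2 u (fbar h1 q w) f (gg h2 w) =
     UU u w * h2^2 * (q*h2 - h1) * (h1*w^2 - h2*f*w + h2^2) * (w^2 + h2) / w^6"
proof -
  have nz: "w - h2/w \<noteq> 0" using assms(1,5) by (auto simp: field_simps power2_eq_square)
  have "VV h1 h2 u (fbar h1 q w) f (gg h2 w) * (w - h2/w) =
        (UU u w * h2^2 * (q*h2 - h1) * (h1*w^2 - h2*f*w + h2^2) * (w^2 + h2) / w^6) * (w - h2/w)"
    unfolding VV_at_gg[OF assms(1,3,6)] using assms(1-4)
    by (simp add: fbar_def gg_def field_simps)
      (simp add: algebra_simps power2_eq_square power3_eq_cube power4_eq_xxxx numeral_eq_Suc)
  thus ?thesis using nz by (metis mult_right_cancel)
qed

lemma VV_on_fibre: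
  assumes "w \<noteq> 0" "h1 \<noteq> 0" "h2 \<noteq> 0" "q \<noteq> 0" "w^2 \<noteq> h2" "q = qq h1 h2 u"
  shows "VV h1 h2 u fb (ff h1 w) (gg h2 w) =
     UU u w * (w^2 + h2) * (h1 - h2) * h2^2 / w^6
       * ((q*h2 - h1)*(w^2 - h2) + (fb - fbar h1 q w) * q * h2 * w)"
proof -
  have nz: "w - h2/w \<noteq> 0" using assms(1,5) by (auto simp: field_simps power2_eq_square)
  have "VV h1 h2 u fb (ff h1 w) (gg h2 w) * (w - h2/w) =
        (UU u w * (w^2 + h2) * (h1 - h2) * h2^2 / w^6
          * ((q*h2 - h1)*(w^2 - h2) + (fb - fbar h1 q w) * q * h2 * w)) * (w - h2/w)"
    unfolding VV_at_gg[OF assms(1,3,6)] using assms(1-4)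
    by (simp add: fbar_def gg_def ff_def field_simps)
      (simp add: algebra_simps power2_eq_square power3_eq_cube power4_eq_xxxx numeral_eq_Suc)
  thus ?thesis using nz by (metis mult_right_cancel)
qed

lemma VV_at_zero: "h1 \<noteq> 0 \<Longrightarrow> h2 \<noteq> 0 \<Longrightarrow> qq h1 h2 u \<noteq> 0 \<Longrightarrow> VV h1 h2 u x f 0 = 0"
  unfolding VV_def Pd_def Pn_def Let_def
  by (simp add: field_simps; simp add: algebra_simps power2_eq_square power3_eq_cube numeral_eq_Suc)

lemma gg_diff: "s \<noteq> 0 \<Longrightarrow> t \<noteq> 0 \<Longrightarrow> gg h2 s - gg h2 t = (s - t)*(s*t - h2)/(s*t)"
  by (simp add: gg_def field_simps; simp add: algebra_simps)

lemma fbar_diff: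
  "s \<noteq> 0 \<Longrightarrow> t \<noteq> 0 \<Longrightarrow> q \<noteq> 0 \<Longrightarrow> fbar h1 q s - fbar h1 q t = (s - t)*(q*s*t - h1)/(q*s*t)"
  by (simp add: fbar_def field_simps; simp add: algebra_simps)

lemma gg_eq_iff: "s \<noteq> 0 \<Longrightarrow> t \<noteq> 0 \<Longrightarrow> gg h2 s = gg h2 t \<longleftrightarrow> s = t \<or> s*t = h2"
  using gg_diff[of s t h2] by (auto simp: eq_iff_diff_eq_0[of "gg h2 s"])

lemma fbar_eq_iff:
  "s \<noteq> 0 \<Longrightarrow> t \<noteq> 0 \<Longrightarrow> q \<noteq> 0 \<Longrightarrow> fbar h1 q s = fbar h1 q t \<longleftrightarrow> s = t \<or> q*s*t = h1"
  using fbar_diff[of s t q h1] by (auto simp: eq_iff_diff_eq_0[of "fbar h1 q s"])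

lemma phi_factor:
  assumes "w \<noteq> 0" "h1 \<noteq> 0" "h2 \<noteq> 0" "q \<noteq> 0"
  shows "(x - gg h2 w) * (q * x / h1 - gg h2 w / h2) - (h1 / q - h2) * (q / h1 - 1 / h2)
      = q/h1 * (x - fbar h1 q w) * (x - fbar h1 q (h2/w))"
  using assms by (simp add: gg_def fbar_def field_simps; simp add: algebra_simps power2_eq_square)

lemma fbar_affine_shift:
  "w \<noteq> 0 \<Longrightarrow> h2 \<noteq> 0 \<Longrightarrow> q \<noteq> 0 \<Longrightarrow>
   (q*h2 - h1)*(w^2 - h2) + (x - fbar h1 q w)*q*h2*w = q*h2*w*(x - fbar h1 q (h2/w))"
  by (simp add: fbar_def field_simps; simp add: algebra_simps power2_eq_square)

(* The two scalar identities making the poles of L1u at g = g(h1/z) and g = g(z) cancel. *)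
lemma pole_cancel_at_g1:
  fixes h1 h2 q z :: complex
  assumes "h1 \<noteq> 0" "h2 \<noteq> 0" "q \<noteq> 0" "z \<noteq> 0" "z^2 \<noteq> h1*q"
  shows "(h1 - h2*q) * z^2 * (z^2 - h1) / (h1^3 * h2^3 * q^5)
           * ((h1/z)^2+h2)*(h1-h2)*h2^2*q*h2*(h1/z)/(h1/z)^6
     = z^8/((z^2-h1*q)*h1^4*q^4) * gg h2 (h1/z) * (gg h2 (h1/z) - gg h2 z)
           * (gg h2 (h1/z) - gg h2 (z/q)) * (q/h1)"
proof -
  have "z^2 - h1*q \<noteq> 0" using assms by simp
  thus ?thesis using assms unfolding gg_diff[of "h1/z" z h2] gg_diff[of "h1/z" "z/q" h2]
    by (simp_all add: gg_def field_simps)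
      (simp add: algebra_simps power2_eq_square power3_eq_cube numeral_eq_Suc)
qed

lemma pole_cancel_at_g2:
  fixes h1 h2 q z :: complex
  assumes "h1 \<noteq> 0" "h2 \<noteq> 0" "q \<noteq> 0" "z \<noteq> 0" "q*z^2 \<noteq> h1"
  shows "(h1 - h2*q) * z^2 * (z^2 - h1) / (h1^3 * h2^3 * q^5) * (z^2+h2)*(h1-h2)*h2^2*q*h2*z/z^6
     = 1/(q^4*(q*z^2-h1)) * gg h2 z * (gg h2 z - gg h2 (h1/z)) * (gg h2 z - gg h2 (h1/(q*z))) * (q/h1)"
proof -
  have "q*z^2 - h1 \<noteq> 0" using assms by simp
  thus ?thesis using assms unfolding gg_diff[of z "h1/z" h2] gg_diff[of z "h1/(q*z)" h2]
    by (simp_all add: gg_def field_simps)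
      (simp add: algebra_simps power2_eq_square power3_eq_cube numeral_eq_Suc)
qed

section \<open>The curve equation as an explicit rational expression\<close>

locale curve_setting =
  fixes h1 h2 :: complex and u :: "nat \<Rightarrow> complex" and z Y0 Y1 Y2 :: complex
  assumes h1: "h1 \<noteq> 0" and h2: "h2 \<noteq> 0" and z0: "z \<noteq> 0"
    and Y0: "Y0 \<noteq> 0" and Y1: "Y1 \<noteq> 0" and Y2: "Y2 \<noteq> 0"
    and u_nonzero: "\<forall>i\<in>{1..8}. u i \<noteq> 0"
    and qh: "qq h1 h2 u * h2 \<noteq> h1"
    and zq1: "z^2 \<noteq> h1 * qq h1 h2 u" and zq2: "qq h1 h2 u * z^2 \<noteq> h1"
    and U_zq: "UU u (z / qq h1 h2 u) \<noteq> 0" and U_hqz: "UU u (h1 / (qq h1 h2 u * z)) \<noteq> 0"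
    and g1_nonzero: "gg h2 (h1/z) \<noteq> 0" and g2_nonzero: "gg h2 z \<noteq> 0"
    and g1_ne_g2: "gg h2 (h1/z) \<noteq> gg h2 z"
    and sq_hz: "(h1/z)^2 \<noteq> h2" and sq_z: "z^2 \<noteq> h2"
begin

(* The fbar-poles a, b, the g-poles g1, g2, the g-values g3, g4 of the two base points, and the
   coefficients of L1u. *)
definition "q = qq h1 h2 u"
definition "a = fbar h1 q (z/q)"
definition "b = fbar h1 q z"
definition "g1 = gg h2 (h1/z)"
definition "g2 = gg h2 z"
definition "g3 = gg h2 (z/q)"
definition "g4 = gg h2 (h1/(q*z))"
definition "C1 = UU u (z/q) / (z^2 - h1*q)"
definition "A1 = z^8/(h1^4*q^4) * (UU u (h1/z) / UU u (z/q))"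
definition "C2 = z^8 * UU u (h1/(q*z)) / ((q*z^2 - h1)*h1^4)"
definition "A2 = h1^4/(q^4*z^8) * (UU u z / UU u (h1/(q*z)))"
definition "K = (h1 - h2*q)*z^2*(z^2-h1)/(h1^3*h2^3*q^5)"
definition "phi x y = phiu h1 h2 u x y"

(* Numerator of the Y1-part of phi (x-a) (x-b) L1u, and the resulting explicit form of curveE. *)
definition "Wnum x y = K*(x-a)*(x-b)*VV h1 h2 u x (ff h1 z) y
                    - C1*A1*(x-b)*y*(y-g2)*(y-g3)*phi x y
                    - C2*A2*(x-a)*y*(y-g1)*(y-g4)*phi x y"
definition "Ecurve x y = Y0*C1*phi x y*(x-b) + Y2*C2*phi x y*(x-a) + Y1*Wnum x y/(y*(y-g1)*(y-g2))"

lemma q_nonzero: "q \<noteq> 0"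
  using h1 h2 u_nonzero by (simp add: q_def qq_def)

lemma L1u_explicit:
  "L1u h1 h2 u z Y0 Y1 Y2 x y = C1*(Y0 - A1*((y-g3)/(y-g1))*Y1)/(x-a)
     + C2*(Y2 - A2*((y-g4)/(y-g2))*Y1)/(x-b)
     + K*VV h1 h2 u x (ff h1 z) y*Y1/(y*(y-g1)*(y-g2)*phi x y)"
  unfolding L1u_def Let_def q_def[symmetric] C1_def A1_def C2_def A2_def K_def a_def b_def
     g1_def g2_def g3_def g4_def phi_def
  by (simp add: field_simps)

lemma clear_denominators:
  fixes P Xa Xb y d1 d2 n3 n4 c1 c2 a1 a2 k V y0 y1 y2 :: complex
  assumes "Xa \<noteq> 0" "Xb \<noteq> 0" "P \<noteq> 0" "y \<noteq> 0" "d1 \<noteq> 0" "d2 \<noteq> 0"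
  shows "P*Xa*Xb*(c1*(y0 - a1*(n3/d1)*y1)/Xa + c2*(y2 - a2*(n4/d2)*y1)/Xb
           + k*V*y1/(y*d1*d2*P))
   = y0*c1*P*Xb + y2*c2*P*Xa + y1*(k*Xa*Xb*V - c1*a1*Xb*y*d2*n3*P - c2*a2*Xa*y*d1*n4*P)/(y*d1*d2)"
  using assms by (simp add: field_simps)

lemma curveE_eq_Ecurve:
  assumes "curve_dom h1 h2 u z x y"
  shows "curveE h1 h2 u z Y0 Y1 Y2 x y = Ecurve x y"
proof -
  have d: "x \<noteq> a" "x \<noteq> b" "y \<noteq> 0" "phi x y \<noteq> 0" "y \<noteq> g1" "y \<noteq> g2"
    using assms unfolding curve_dom_def Let_def q_def[symmetric] a_def b_def g1_def g2_def phi_def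
    by auto
  have "curveE h1 h2 u z Y0 Y1 Y2 x y = phi x y * (x - a) * (x - b) * L1u h1 h2 u z Y0 Y1 Y2 x y"
    unfolding curveE_def Let_def q_def[symmetric] a_def b_def phi_def ..
  also have "\<dots> = Ecurve x y"
    unfolding L1u_explicit Ecurve_def Wnum_def using d
    by (subst clear_denominators) (auto simp: mult_ac)
  finally show ?thesis .
qed

lemma phi_on_curve: "w \<noteq> 0 \<Longrightarrow> phi (fbar h1 q w) (gg h2 w) = 0"
  unfolding phi_def phiu_def Let_def q_def[symmetric] using phi_factor[OF _ h1 h2 q_nonzero] by simp

lemma phi_on_fibre:
  "w \<noteq> 0 \<Longrightarrow> phi (fbar h1 q w) y = (y - gg h2 w)*(y - gg h2 (h1/(q*w)))/h2"
  unfolding phi_def phiu_def Let_def q_def[symmetric]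
  using h1 h2 q_nonzero
  by (simp add: fbar_def gg_def field_simps; simp add: algebra_simps power2_eq_square)

lemma Wnum_at_zero: "Wnum x 0 = 0"
  unfolding Wnum_def using VV_at_zero[OF h1 h2, of u] q_nonzero by (simp add: q_def)

(* At g = g1 (resp. g2) the V-term and the matching pole term of W cancel. *)
lemma cancel_pair:
  fixes k Xa Xb X' U L0 r R G s T :: complex
  assumes "k*L0*r = R*G*s"
  shows "k*Xa*Xb*(U*L0*(r*X')) - (R*U)*Xb*G*(s*Xa*X') - T*0 = 0"
proof -
  have "k*Xa*Xb*(U*L0*(r*X')) - (R*U)*Xb*G*(s*Xa*X') = Xa*Xb*X'*U*(k*L0*r - R*G*s)"
    by (simp add: algebra_simps)
  thus ?thesis using assms by simp
qed

(* Vanishing at g1 rests on the closed form of V on the fibre g = g(h1/z) and on the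
   scalar identity pole_cancel_at_g1; the case g2 is symmetric. *)
lemma Wnum_at_g1: "Wnum x g1 = 0"
proof -
  define w where "w = h1/z"
  have w0: "w \<noteq> 0" using h1 z0 by (simp add: w_def)
  have fbar_w: "fbar h1 q w = a"
    unfolding a_def fbar_def w_def using z0 q_nonzero h1 by (simp add: field_simps)
  have ff_w: "ff h1 w = ff h1 z"
    unfolding ff_def w_def using z0 h1 by (simp add: field_simps)
  define L0 where "L0 = (w^2+h2)*(h1-h2)*h2^2/w^6"
  define R where "R = z^8/((z^2-h1*q)*h1^4*q^4)"
  define G where "G = g1*(g1-g2)*(g1-g3)"
  define X' where "X' = x - fbar h1 q (h2/w)"
  define r where "r = q*h2*w"
  define s where "s = q/h1"
  have V: "VV h1 h2 u x (ff h1 z) g1 = UU u w * L0 * (r*X')"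
    unfolding g1_def ff_w[symmetric] w_def[symmetric]
      VV_on_fibre[OF w0 h1 h2 q_nonzero sq_hz[folded w_def] q_def]
      fbar_affine_shift[OF w0 h2 q_nonzero] L0_def r_def X'_def by simp
  have P: "phi x g1 = s * (x - a) * X'"
    unfolding phi_def phiu_def Let_def q_def[symmetric] g1_def w_def[symmetric]
      phi_factor[OF w0 h1 h2 q_nonzero] fbar_w s_def X'_def ..
  have CA: "C1*A1 = R * UU u w"
    unfolding C1_def A1_def R_def w_def using U_zq zq1 h1 q_nonzero by (simp add: q_def field_simps)
  have C: "K*L0*r = R*G*s"
    unfolding K_def L0_def r_def R_def G_def s_def g1_def g2_def g3_def w_def
    using pole_cancel_at_g1[OF h1 h2 q_nonzero z0] zq1 by (simp add: q_def mult_ac)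
  have "Wnum x g1 = K*(x-a)*(x-b)*(UU u w * L0 * (r*X')) - (R*UU u w)*(x-b)*G*(s*(x-a)*X')
                   - (C2*A2*(x-a)*g1*(g1-g4)*phi x g1)*0"
    unfolding Wnum_def V P[symmetric] CA[symmetric] G_def by (simp add: mult_ac)
  also have "\<dots> = 0" by (rule cancel_pair[OF C])
  finally show ?thesis .
qed

lemma Wnum_at_g2: "Wnum x g2 = 0"
proof -
  define L0 where "L0 = (z^2+h2)*(h1-h2)*h2^2/z^6"
  define R where "R = 1/(q^4*(q*z^2-h1))"
  define G where "G = g2*(g2-g1)*(g2-g4)"
  define X' where "X' = x - fbar h1 q (h2/z)"
  define r where "r = q*h2*z"
  define s where "s = q/h1"
  have V: "VV h1 h2 u x (ff h1 z) g2 = UU u z * L0 * (r*X')"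
    unfolding g2_def VV_on_fibre[OF z0 h1 h2 q_nonzero sq_z q_def]
      fbar_affine_shift[OF z0 h2 q_nonzero] L0_def r_def X'_def by simp
  have P: "phi x g2 = s * (x - b) * X'"
    unfolding phi_def phiu_def Let_def q_def[symmetric] g2_def phi_factor[OF z0 h1 h2 q_nonzero]
      b_def[symmetric] s_def X'_def ..
  have CA: "C2*A2 = R * UU u z"
    unfolding C2_def A2_def R_def using U_hqz zq2 h1 q_nonzero z0 by (simp add: q_def field_simps)
  have C: "K*L0*r = R*G*s"
    unfolding K_def L0_def r_def R_def G_def s_def g1_def g2_def g4_def
    using pole_cancel_at_g2[OF h1 h2 q_nonzero z0] zq2 by (simp add: q_def mult_ac)
  have "Wnum x g2 = K*(x-b)*(x-a)*(UU u z * L0 * (r*X')) - (R*UU u z)*(x-a)*G*(s*(x-b)*X')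
                   - (C1*A1*(x-b)*g2*(g2-g3)*phi x g2)*0"
    unfolding Wnum_def V P[symmetric] CA[symmetric] G_def by (simp add: mult_ac)
  also have "\<dots> = 0" by (rule cancel_pair[OF C])
  finally show ?thesis .
qed

definition "k0 = (h1/q - h2)*(q/h1 - 1/h2)"
definition "k1 = (h1/q - h2)*(h1-h2)*(1/h2)"
definition "k2 = (q/h1 - 1/h2)*(1/h1-1/h2)*h2"

definition "Pd_poly = (let m = mm u in [: h2^6*m 0 - h2^5*m 2 + h2^4*m 4 - h2^3*m 6 + h2^2*m 8,
   2*h2^2*m 7 - h2^3*m 5 + h2^5*m 1, h2^2*m 6 - 3*h2*m 8 - h2^5*m 0, - h2*m 7, m 8 :])"
definition "Pn_poly = (let m = mm u in [: h2^2*m 0 - h2*m 2 + m 4 - m 6/h2 + m 8/h2^2,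
   2*h2*m 1 - m 3 + m 7/h2^2, m 2 - 3*h2*m 0 - m 8/h2^3, - m 1, m 0 :])"
definition "VV_in_g x f = smult q ([: x*f - k1, -(x+f), 1 :] * Pd_poly)
   - smult (h1^2*h2^4) ([: x*q/h1*(f/h1) - k2, -(x*q/h1/h2 + f/h1/h2), 1/h2^2 :] * Pn_poly)"
definition "phi_in_g x = [: q*x^2/h1 - k0, -(x*q/h1 + x/h2), 1/h2 :]"
definition "Wnum_in_g x = smult (K*(x-a)*(x-b)) (VV_in_g x (ff h1 z))
   - smult (C1*A1*(x-b)) ([:0,1:]*[:-g2,1:]*[:-g3,1:]*phi_in_g x)
   - smult (C2*A2*(x-a)) ([:0,1:]*[:-g1,1:]*[:-g4,1:]*phi_in_g x)"

lemma poly_VV_in_g: "poly (VV_in_g x f) y = VV h1 h2 u x f y"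
proof -
  have "poly (VV_in_g x f) y
      = q * poly [: x*f - k1, -(x+f), 1 :] y * poly Pd_poly y
        - h1^2*h2^4 * poly [: x*q/h1*(f/h1) - k2, -(x*q/h1/h2 + f/h1/h2), 1/h2^2 :] y * poly Pn_poly y"
    unfolding VV_in_g_def by (simp only: poly_diff poly_smult poly_mult mult.assoc)
  also have "poly Pd_poly y = Pd u h2 y"
    unfolding Pd_poly_def Pd_def Let_def
    by (simp add: algebra_simps power2_eq_square power3_eq_cube power4_eq_xxxx)
  also have "poly Pn_poly y = Pn u h2 y"
    unfolding Pn_poly_def Pn_def Let_def
    by (simp add: algebra_simps power2_eq_square power3_eq_cube power4_eq_xxxx)
  also have "poly [: x*f - k1, -(x+f), 1 :] y = (x - y) * (f - y) - (h1 / q - h2) * (h1 - h2) * (1 / h2)"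
    unfolding k1_def by (simp add: algebra_simps)
  also have "poly [: x*q/h1*(f/h1) - k2, -(x*q/h1/h2 + f/h1/h2), 1/h2^2 :] y
      = (x * q / h1 - y / h2) * (f / h1 - y / h2) - (q / h1 - 1 / h2) * (1 / h1 - 1 / h2) * h2"
    unfolding k2_def using h1 h2 by (simp add: field_simps power2_eq_square)
  finally show ?thesis unfolding VV_def Let_def q_def .
qed

lemma poly_phi_in_g: "poly (phi_in_g x) y = phi x y"
  unfolding phi_in_g_def phi_def phiu_def Let_def q_def[symmetric] k0_def
  using h1 h2 by (simp add: field_simps power2_eq_square)

lemma poly_Wnum_in_g: "poly (Wnum_in_g x) y = Wnum x y"
  unfolding Wnum_in_g_def Wnum_def by (simp add: poly_VV_in_g poly_phi_in_g algebra_simps)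

(* The g^6-coefficient of V cancels because q m_8 = h1^2 h2^2. *)
lemma degree_VV_in_g: "degree (VV_in_g x f) \<le> 5"
proof (rule degree_drop_top)
  let ?X1 = "[: x*f - k1, -(x+f), 1 :]"
  let ?X2 = "[: x*q/h1*(f/h1) - k2, -(x*q/h1/h2 + f/h1/h2), 1/h2^2 :]"
  have d: "degree ?X1 \<le> 2" "degree ?X2 \<le> 2" "degree Pd_poly \<le> 4" "degree Pn_poly \<le> 4"
    unfolding Pd_poly_def Pn_poly_def Let_def by (rule degree_quadratic_le degree_quartic_le)+
  show "degree (VV_in_g x f) \<le> Suc 5"
    unfolding VV_in_g_def using degree_mult_bound[OF d(1,3)] degree_mult_bound[OF d(2,4)]
    by (intro degree_diff_le degree_smult_bound) simp_all
  have "q * mm u 8 = h1^2*h2^2"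
    unfolding q_def qq_def mm_8 using u_nonzero by (simp add: field_simps)
  thus "coeff (VV_in_g x f) (Suc 5) = 0"
    using coeff_mult_top[OF d(1,3)] coeff_mult_top[OF d(2,4)] h2
    unfolding VV_in_g_def
    by (simp add: Pd_poly_def Pn_poly_def Let_def mm_0 field_simps power2_eq_square numeral_eq_Suc)
qed

lemma degree_Wnum_in_g: "degree (Wnum_in_g x) \<le> 5"
proof -
  have lin: "degree [:c, 1::complex:] \<le> 1" for c by (rule degree_linear_le)
  have cubic_phi: "degree ([:0,1:]*[:-c,1:]*[:-d,1:]*phi_in_g x) \<le> 5" for c d :: complex
    using degree_mult_bound[OF degree_mult_bound[OF degree_mult_bound[OF lin lin] lin]
        degree_quadratic_le[of "q*x^2/h1 - k0" "-(x*q/h1 + x/h2)" "1/h2"]]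
    by (simp add: phi_in_g_def)
  show ?thesis
    unfolding Wnum_in_g_def
    by (intro degree_diff_le degree_smult_bound degree_VV_in_g cubic_phi)
qed

(* Since W has degree <= 5 and vanishes at 0, g1, g2, Ecurve is quadratic in g. *)
lemma Ecurve_poly_in_g:
  "\<exists>Q. degree Q \<le> 2 \<and> (\<forall>y. y \<noteq> 0 \<longrightarrow> y \<noteq> g1 \<longrightarrow> y \<noteq> g2 \<longrightarrow> Ecurve x y = poly Q y)"
proof -
  have dist: "distinct [0, g1, g2]"
    using g1_nonzero g2_nonzero g1_ne_g2 by (simp add: g1_def g2_def)
  have roots: "\<forall>r\<in>set [0, g1, g2]. poly (Wnum_in_g x) r = 0"
    using Wnum_at_zero Wnum_at_g1 Wnum_at_g2 by (simp add: poly_Wnum_in_g)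
  have "degree (Wnum_in_g x) \<le> 2 + length [0, g1, g2]" using degree_Wnum_in_g[of x] by simp
  then obtain Q where Q: "degree Q \<le> 2" "Wnum_in_g x = root_poly [0, g1, g2] * Q"
    using root_poly_quotient[OF dist roots] by blast
  let ?P = "smult (Y0*C1*(x-b)) (phi_in_g x) + smult (Y2*C2*(x-a)) (phi_in_g x) + smult Y1 Q"
  have "degree ?P \<le> 2"
    using Q(1) by (intro degree_add_le degree_smult_bound) (simp_all add: phi_in_g_def degree_quadratic_le)
  moreover have "Ecurve x y = poly ?P y" if "y \<noteq> 0" "y \<noteq> g1" "y \<noteq> g2" for y
  proof -
    have "Wnum x y = y * (y - g1) * (y - g2) * poly Q y"
      using arg_cong[OF Q(2), of "\<lambda>p. poly p y"] by (simp add: poly_Wnum_in_g root_poly_def algebra_simps)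
    thus ?thesis unfolding Ecurve_def using that by (simp add: poly_phi_in_g)
  qed
  ultimately show ?thesis by blast
qed

definition "phi_in_fb y = [: y^2/h2 - k0, -(y/h2 + q*y/h1), q/h1 :]"
definition "VV_in_fb y = (let f = ff h1 z; PD = Pd u h2 y; PN = Pn u h2 y; H = h1^2*h2^4 in
  [: q*((0 - y)*(f-y) - k1)*PD - H*((0 - y/h2)*(f/h1 - y/h2) - k2)*PN,
     q*(f-y)*PD - H*(q/h1)*(f/h1 - y/h2)*PN :])"

lemma poly_phi_in_fb: "poly (phi_in_fb y) x = phi x y"
  unfolding phi_in_fb_def phi_def phiu_def Let_def q_def[symmetric] k0_def
  using h1 h2 by (simp add: field_simps power2_eq_square)

lemma poly_VV_in_fb: "poly (VV_in_fb y) x = VV h1 h2 u x (ff h1 z) y"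
proof -
  have affine: "(al*((0-y)*be - ga)*P - de*((0-T)*e - ka)*N) + x*(al*be*P - de*S*e*N)
     = al*((x - y)*be - ga)*P - de*((x*S - T)*e - ka)*N"
    for al y be ga P de T e ka N x S :: complex
    by (simp add: algebra_simps)
  have "poly (VV_in_fb y) x = q*((x - y)*(ff h1 z - y) - k1)*Pd u h2 y
     - (h1^2*h2^4)*((x*(q/h1) - y/h2)*(ff h1 z/h1 - y/h2) - k2)*Pn u h2 y"
    unfolding VV_in_fb_def Let_def poly_pCons poly_0 mult_zero_right add_0_right by (rule affine)
  thus ?thesis unfolding VV_def Let_def q_def[symmetric] k1_def k2_def by simp
qed

lemma Ecurve_poly_in_fb: "\<exists>P. degree P \<le> 3 \<and> (\<forall>x. Ecurve x y = poly P x)"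
proof -
  let ?P = "smult (Y0*C1) (phi_in_fb y * [:-b,1:]) + smult (Y2*C2) (phi_in_fb y * [:-a,1:])
     + smult (Y1/(y*(y-g1)*(y-g2))) (smult K ([:-a,1:]*[:-b,1:]*VV_in_fb y)
         - smult (C1*A1*y*(y-g2)*(y-g3)) ([:-b,1:]*phi_in_fb y)
         - smult (C2*A2*y*(y-g1)*(y-g4)) ([:-a,1:]*phi_in_fb y))"
  have p: "degree (phi_in_fb y) \<le> 2" unfolding phi_in_fb_def by (rule degree_quadratic_le)
  have v: "degree (VV_in_fb y) \<le> 1" unfolding VV_in_fb_def Let_def by (rule degree_linear_le)
  have l: "degree [:c, 1::complex:] \<le> 1" for c by (rule degree_linear_le)
  have d1: "degree (phi_in_fb y * [:-c,1:]) \<le> 3" for c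
    using degree_mult_bound[OF p l[of "-c"]] by (simp del: mult_pCons_right mult_pCons_left)
  have d2: "degree ([:-c,1:] * phi_in_fb y) \<le> 3" for c
    using degree_mult_bound[OF l[of "-c"] p] by (simp del: mult_pCons_right mult_pCons_left)
  have d3: "degree ([:-a,1:]*[:-b,1:]*VV_in_fb y) \<le> 3"
    using degree_mult_bound[OF degree_mult_bound[OF l[of "-a"] l[of "-b"]] v]
    by (simp del: mult_pCons_right mult_pCons_left)
  have "degree ?P \<le> 3"
    by (intro degree_add_le degree_diff_le degree_smult_bound d1 d2 d3)
  moreover have "Ecurve x y = poly ?P x" for x
  proof -
    have "poly ?P x = Y0*C1*phi x y*(x-b) + Y2*C2*phi x y*(x-a) + Y1/(y*(y-g1)*(y-g2)) * Wnum x y"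
      unfolding Wnum_def by (simp add: poly_phi_in_fb poly_VV_in_fb algebra_simps)
    thus ?thesis unfolding Ecurve_def by simp
  qed
  ultimately show ?thesis by blast
qed

(* The coefficients of the curve: interpolate the quadratic slices at fb = 0, 1, 2, 3. *)
definition "slice k = (SOME Q. degree Q \<le> 2 \<and>
   (\<forall>y. y \<noteq> 0 \<longrightarrow> y \<noteq> g1 \<longrightarrow> y \<noteq> g2 \<longrightarrow> Ecurve (of_nat k) y = poly Q y))"
definition "coef i j = (\<Sum>k<4. lagrange_coeff k i * coeff (slice k) j)"

lemma slice: "degree (slice k) \<le> 2"
  "y \<noteq> 0 \<Longrightarrow> y \<noteq> g1 \<Longrightarrow> y \<noteq> g2 \<Longrightarrow> Ecurve (of_nat k) y = poly (slice k) y"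
  using someI_ex[OF Ecurve_poly_in_g[of "of_nat k"]] unfolding slice_def by blast+

lemma Ecurve_eq_bpoly:
  assumes "y \<noteq> 0" "y \<noteq> g1" "y \<noteq> g2"
  shows "Ecurve x y = bpoly coef x y"
proof -
  obtain P where P: "degree P \<le> 3" "\<And>x. Ecurve x y = poly P x" using Ecurve_poly_in_fb[of y] by blast
  have "Ecurve x y = (\<Sum>k<4. Ecurve (of_nat k) y * (\<Sum>i\<le>3. lagrange_coeff k i * x^i))"
    unfolding P(2) by (rule lagrange_cubic[OF P(1)])
  also have "\<dots> = (\<Sum>k<4. (\<Sum>j\<le>2. coeff (slice k) j * y^j) * (\<Sum>i\<le>3. lagrange_coeff k i * x^i))"
    using slice(2)[OF assms] poly_as_bounded_sum[OF slice(1)] by simp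
  also have "\<dots> = bpoly coef x y"
    unfolding bpoly_def coef_def
    by (simp add: numeral_eq_Suc lessThan_Suc atMost_Suc algebra_simps)
  finally show ?thesis .
qed

section \<open>The twelve points lie on the curve\<close>

(* The multipliers in the two extra-point conditions, and the g-coordinates yz, yq they
   single out over fb = fb(z) = b and fb = fb(z/q) = a. *)
definition "Mz = q^4*z^8/h1^4 * (UU u (h1/(q*z)) / UU u z)"
definition "Mq = q^4*(z/q)^8/h1^4 * (UU u (h1/(q*(z/q))) / UU u (z/q))"
definition "yz = (Mz*g2 - Y1/Y2*g4)/(Mz - Y1/Y2)"
definition "yq = (Mq*g3 - Y0/Y1*g1)/(Mq - Y0/Y1)"

end

locale curve_generic = curve_setting +
  assumes u_generic: "\<forall>i\<in>{1..8}. gg h2 (u i) \<noteq> 0 \<and> gg h2 (u i) \<noteq> g1 \<and> gg h2 (u i) \<noteq> g2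
                                    \<and> (u i)^2 \<noteq> h2"
    and g3_generic: "g3 \<noteq> 0" "g3 \<noteq> g1" "g3 \<noteq> g2"
    and g4_generic: "g4 \<noteq> 0" "g4 \<noteq> g1" "g4 \<noteq> g2"
    and U_z: "UU u z \<noteq> 0" and U_hz: "UU u (h1/z) \<noteq> 0"
    and Mz_generic: "Mz \<noteq> Y1/Y2" "yz \<noteq> 0" "yz \<noteq> g1"
    and Mq_generic: "Mq \<noteq> Y0/Y1" "yq \<noteq> 0" "yq \<noteq> g2"
    and a_ne_b: "a \<noteq> b" and g2_ne_g4: "g2 \<noteq> g4" and sq_z_h1: "z^2 \<noteq> h1"
    and roots_distinct: "distinct [u 1, u 2, u 3, u 4, u 5, u 6, u 7, u 8, z/q, h1/(q*z)]"
begin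

lemma Mz_nonzero: "Mz \<noteq> 0"
  unfolding Mz_def using U_hqz U_z q_nonzero z0 h1 by (simp add: q_def)

lemma Mq_nonzero: "Mq \<noteq> 0"
proof -
  have "h1/(q*(z/q)) = h1/z" using q_nonzero by simp
  thus ?thesis unfolding Mq_def using U_hz U_zq q_nonzero z0 h1 by (simp add: q_def)
qed

lemma A2_eq: "A2 = 1/Mz"
  unfolding A2_def Mz_def using U_z U_hqz h1 q_nonzero z0 by (simp add: q_def field_simps)

lemma A1_eq: "A1 = Mq"
proof -
  have "h1/(q*(z/q)) = h1/z" using q_nonzero by simp
  thus ?thesis unfolding A1_def Mq_def using U_zq h1 q_nonzero z0 by (simp add: q_def field_simps)
qed

lemma moebius_solution:
  fixes M r c d y :: complex
  assumes "M \<noteq> r" "M \<noteq> 0" "c \<noteq> d"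
  shows "y \<noteq> d \<and> M * ((y - c)/(y - d)) = r \<longleftrightarrow> y = (M*c - r*d)/(M - r)"
proof
  assume "y \<noteq> d \<and> M * ((y - c)/(y - d)) = r"
  hence "y - d \<noteq> 0" "M * ((y - c)/(y - d)) = r" by auto
  hence "M*(y - c) = r*(y - d)" by (simp add: field_simps)
  hence "y*(M - r) = M*c - r*d" by (simp add: algebra_simps)
  thus "y = (M*c - r*d)/(M - r)" using assms(1) by (simp add: field_simps)
next
  assume y: "y = (M*c - r*d)/(M - r)"
  have Mr: "M - r \<noteq> 0" using assms(1) by simp
  have yd: "y - d = M*(c - d)/(M - r)" and yc: "y - c = r*(c - d)/(M - r)"
    unfolding y using Mr by (simp_all add: field_simps)
  have nz: "y - d \<noteq> 0" unfolding yd using assms Mr by simp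
  have "y - c = r/M * (y - d)" unfolding yd yc using assms(2) by simp
  hence "M * ((y - c)/(y - d)) = r" using nz assms(2) by simp
  with nz show "y \<noteq> d \<and> M * ((y - c)/(y - d)) = r" by simp
qed

lemma yz_equation: "yz \<noteq> g4" "Mz * ((yz - g2)/(yz - g4)) = Y1/Y2"
  using moebius_solution[OF Mz_generic(1) Mz_nonzero g2_ne_g4, of yz] by (simp_all add: yz_def)

lemma yq_equation: "yq \<noteq> g1" "Mq * ((yq - g3)/(yq - g1)) = Y0/Y1"
  using moebius_solution[OF Mq_generic(1) Mq_nonzero g3_generic(2), of yq] by (simp_all add: yq_def)

lemma extra_pt_z_iff: "extra_pt h1 h2 u z Y1 Y2 y \<longleftrightarrow> y = yz"
proof -
  have "extra_pt h1 h2 u z Y1 Y2 y \<longleftrightarrow> y \<noteq> g4 \<and> Mz * ((y - g2)/(y - g4)) = Y1/Y2"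
    unfolding extra_pt_def Let_def q_def[symmetric] g4_def g2_def Mz_def by (simp add: mult.assoc)
  thus ?thesis
    unfolding yz_def using moebius_solution[OF Mz_generic(1) Mz_nonzero g2_ne_g4] by simp
qed

lemma extra_pt_zq_iff: "extra_pt h1 h2 u (z/q) Y0 Y1 y \<longleftrightarrow> y = yq"
proof -
  have hz: "h1/(q*(z/q)) = h1/z" using q_nonzero by simp
  have "extra_pt h1 h2 u (z/q) Y0 Y1 y \<longleftrightarrow> y \<noteq> g1 \<and> Mq * ((y - g3)/(y - g1)) = Y0/Y1"
    unfolding extra_pt_def Let_def q_def[symmetric] hz g1_def g3_def Mq_def by (simp add: mult.assoc)
  thus ?thesis
    unfolding yq_def using moebius_solution[OF Mq_generic(1) Mq_nonzero g3_generic(2)] by simp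
qed

lemma bpoly_coef_eq:
  "y \<noteq> 0 \<Longrightarrow> y \<noteq> g1 \<Longrightarrow> y \<noteq> g2 \<Longrightarrow> bpoly coef x y = Ecurve x y"
  using Ecurve_eq_bpoly by simp

lemma yz_ne_g2: "yz \<noteq> g2"
  using yz_equation Y1 Y2 by auto

lemma point_u: "i \<in> {1..8} \<Longrightarrow> bpoly coef (fbar h1 q (u i)) (gg h2 (u i)) = 0"
proof -
  assume i: "i \<in> {1..8}"
  have c: "gg h2 (u i) \<noteq> 0" "gg h2 (u i) \<noteq> g1" "gg h2 (u i) \<noteq> g2" "(u i)^2 \<noteq> h2" "u i \<noteq> 0"
    using u_generic u_nonzero i by auto
  have "VV h1 h2 u (fbar h1 q (u i)) (ff h1 z) (gg h2 (u i)) = 0"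
    unfolding VV_on_phi_curve[OF c(5) h1 h2 q_nonzero c(4) q_def] UU_root[OF i] by simp
  thus ?thesis unfolding bpoly_coef_eq[OF c(1-3)] Ecurve_def Wnum_def phi_on_curve[OF c(5)] by simp
qed

lemma point_zq: "bpoly coef (fbar h1 q (z/q)) (gg h2 (z/q)) = 0"
proof -
  have "phi a g3 = 0" unfolding a_def g3_def by (rule phi_on_curve) (use z0 q_nonzero in simp)
  thus ?thesis
    unfolding a_def[symmetric] g3_def[symmetric] bpoly_coef_eq[OF g3_generic] Ecurve_def Wnum_def
    by simp
qed

lemma fbar_hqz: "fbar h1 q (h1/(q*z)) = b"
  unfolding b_def fbar_def using h1 q_nonzero z0 by (simp add: field_simps)

lemma point_hqz: "bpoly coef (fbar h1 q (h1/(q*z))) (gg h2 (h1/(q*z))) = 0"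
proof -
  have "phi b g4 = 0"
    unfolding fbar_hqz[symmetric] g4_def by (rule phi_on_curve) (use z0 q_nonzero h1 in simp)
  thus ?thesis
    unfolding fbar_hqz g4_def[symmetric] bpoly_coef_eq[OF g4_generic] Ecurve_def Wnum_def by simp
qed

(* Over fb = a (resp. b) only the pole term of L1u at that fb survives. *)
lemma collapse_single_pole:
  fixes Y Y' C A X P y d1 d2 n :: complex
  assumes "y \<noteq> 0" "d1 \<noteq> 0" "d2 \<noteq> 0"
  shows "Y*C*P*X + Y'*(0 - C*A*X*y*d1*n*P)/(y*d1*d2) = P*X*C*(Y - Y'*A*(n/d2))"
  using assms by (simp add: field_simps)

lemma point_extra_z: "bpoly coef b yz = 0"
proof -
  have y: "yz \<noteq> 0" "yz \<noteq> g1" "yz \<noteq> g2" "yz \<noteq> g4"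
    using Mz_generic(2,3) yz_ne_g2 yz_equation(1) by auto
  have balance: "Y1*A2*((yz-g4)/(yz-g2)) = Y2"
    using yz_equation(2) unfolding A2_eq using Mz_nonzero Y2 y by (simp add: field_simps)
  have "bpoly coef b yz = Y2*C2*phi b yz*(b-a)
      + Y1*(0 - C2*A2*(b-a)*yz*(yz-g1)*(yz-g4)*phi b yz)/(yz*(yz-g1)*(yz-g2))"
    unfolding bpoly_coef_eq[OF y(1-3)] Ecurve_def Wnum_def by simp
  also have "\<dots> = phi b yz*(b-a)*C2*(Y2 - Y1*A2*((yz-g4)/(yz-g2)))"
    by (rule collapse_single_pole) (use y in auto)
  also have "\<dots> = 0" unfolding balance by simp
  finally show ?thesis .
qed

lemma point_extra_zq: "bpoly coef a yq = 0"
proof -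
  have y: "yq \<noteq> 0" "yq \<noteq> g1" "yq \<noteq> g2"
    using Mq_generic(2,3) yq_equation(1) by auto
  have balance: "Y1*A1*((yq-g3)/(yq-g1)) = Y0"
    using yq_equation(2) unfolding A1_eq using Y1 y by (simp add: field_simps)
  have "bpoly coef a yq = Y0*C1*phi a yq*(a-b)
      + Y1*(0 - C1*A1*(a-b)*yq*(yq-g2)*(yq-g3)*phi a yq)/(yq*(yq-g2)*(yq-g1))"
    unfolding bpoly_coef_eq[OF y] Ecurve_def Wnum_def by (simp add: mult_ac)
  also have "\<dots> = phi a yq*(a-b)*C1*(Y0 - Y1*A1*((yq-g3)/(yq-g1)))"
    by (rule collapse_single_pole) (use y in auto)
  also have "\<dots> = 0" unfolding balance by simp
  finally show ?thesis .
qed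

lemma through_pts_coef: "through_pts h1 h2 u z Y0 Y1 Y2 coef"
  unfolding through_pts_def Let_def q_def[symmetric] extra_pt_z_iff extra_pt_zq_iff
  using point_u point_zq point_hqz point_extra_z point_extra_zq
  by (simp add: a_def[symmetric] b_def[symmetric])

end

section \<open>Uniqueness\<close>

lemma bpoly_sub_smult: "bpoly (\<lambda>i j. d i j - s * c i j) x y = bpoly d x y - s * bpoly c x y"
  unfolding bpoly_def by (simp add: sum_subtractf sum_distrib_left algebra_simps)

context curve_setting
begin

(* (q w)^3 w^2 * e(fbar(w), g(w)), a polynomial in w of degree <= 10. *)
definition "pullback e = (\<Sum>i\<le>3. \<Sum>j\<le>2.
   smult (e i j) ([:h1,0,q:]^i * [:0,q:]^(3-i) * [:h2,0,1:]^j * [:0,1:]^(2-j)))"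

lemma poly_pullback:
  assumes w: "w \<noteq> 0"
  shows "poly (pullback e) w = bpoly e (fbar h1 q w) (gg h2 w) * ((q*w)^3 * w^2)"
proof -
  have f: "h1 + w*(w*q) = fbar h1 q w * (q*w)" using w q_nonzero by (simp add: fbar_def field_simps)
  have g: "h2 + w*w = gg h2 w * w" using w by (simp add: gg_def field_simps)
  have monomial: "(h1 + w*(w*q))^i * (w*q)^(3-i) * (h2 + w*w)^j * w^(2-j)
      = fbar h1 q w ^ i * gg h2 w ^ j * ((q*w)^3 * w^2)" if "i \<le> 3" "j \<le> 2" for i j
  proof -
    have "(h1 + w*(w*q))^i * (w*q)^(3-i) = fbar h1 q w ^ i * (q*w)^(i + (3-i))"
      unfolding f power_mult_distrib power_add by (simp add: mult_ac)
    moreover have "(h2 + w*w)^j * w^(2-j) = gg h2 w ^ j * w^(j + (2-j))"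
      unfolding g power_mult_distrib power_add by (simp add: mult_ac)
    ultimately show ?thesis using that by (simp add: mult_ac)
  qed
  have "poly (pullback e) w
      = (\<Sum>i\<le>3. \<Sum>j\<le>2. e i j * ((h1 + w*(w*q))^i * (w*q)^(3-i) * (h2 + w*w)^j * w^(2-j)))"
    unfolding pullback_def by (simp add: poly_sum poly_power mult_ac)
  also have "\<dots> = (\<Sum>i\<le>3. \<Sum>j\<le>2. e i j * (fbar h1 q w ^ i * gg h2 w ^ j * ((q*w)^3 * w^2)))"
    by (intro sum.cong refl) (simp add: monomial)
  also have "\<dots> = bpoly e (fbar h1 q w) (gg h2 w) * ((q*w)^3 * w^2)"
    unfolding bpoly_def by (simp only: sum_distrib_right mult.assoc)
  finally show ?thesis .
qed

lemma degree_pullback: "degree (pullback e) \<le> 10"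
  unfolding pullback_def
proof (intro degree_sum_le finite_atMost)
  fix i j assume i: "i \<in> {..3::nat}" and j: "j \<in> {..2::nat}"
  have power_bound: "degree (p^k) \<le> n * k" if "degree p \<le> n" for p :: "complex poly" and n k
    using degree_power_le[of p k] that by (meson mult_le_mono1 order_trans)
  have "degree ([:h1,0,q:]^i * [:0,q:]^(3-i) * [:h2,0,1:]^j * [:0,1:]^(2-j))
        \<le> 2*i + 1*(3-i) + 2*j + 1*(2-j)"
    by (intro degree_mult_bound power_bound degree_quadratic_le degree_linear_le)
  also have "\<dots> \<le> 10" using i j by simp
  finally show "degree (smult (e i j) ([:h1,0,q:]^i * [:0,q:]^(3-i) * [:h2,0,1:]^j * [:0,1:]^(2-j))) \<le> 10"
    by (rule degree_smult_bound)
qed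

lemma fbar_image_infinite: "infinite (fbar h1 q ` {w. w \<noteq> 0 \<and> w^2 \<noteq> h1/q})"
proof
  let ?S = "{w. w \<noteq> 0 \<and> w^2 \<noteq> h1/q}"
  assume fin: "finite (fbar h1 q ` ?S)"
  have "?S \<subseteq> (\<Union>x\<in>fbar h1 q ` ?S. {w. poly [:h1, -q*x, q:] w = 0})"
  proof
    fix w assume w: "w \<in> ?S"
    have "poly [:h1, -q*fbar h1 q w, q:] w = 0"
      using w q_nonzero by (simp add: fbar_def field_simps power2_eq_square)
    thus "w \<in> (\<Union>x\<in>fbar h1 q ` ?S. {w. poly [:h1, -q*x, q:] w = 0})" using w by blast
  qed
  moreover have "finite (\<Union>x\<in>fbar h1 q ` ?S. {w. poly [:h1, -q*x, q:] w = 0})"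
    using fin by (rule finite_UN_I) (rule poly_roots_finite, use q_nonzero in simp)
  ultimately have "finite ?S" using finite_subset by blast
  moreover have "?S = UNIV - ({0} \<union> {w. w^2 = h1/q})" by auto
  ultimately show False
    using finite_square_roots[of "h1/q"] infinite_UNIV_char_0
    by (metis Diff_infinite_finite finite.emptyI finite.insertI finite_Un)
qed

lemma poly_zero_on_fbar:
  assumes "\<And>w. w \<noteq> 0 \<Longrightarrow> w^2 \<noteq> h1/q \<Longrightarrow> poly p (fbar h1 q w) = 0"
  shows "p = 0"
proof (rule ccontr)
  assume "p \<noteq> 0"
  hence "finite {x. poly p x = 0}" by (rule poly_roots_finite)
  moreover have "fbar h1 q ` {w. w \<noteq> 0 \<and> w^2 \<noteq> h1/q} \<subseteq> {x. poly p x = 0}" using assms by auto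
  ultimately show False using fbar_image_infinite finite_subset by blast
qed

(* g is not a rational function of fbar along phi = 0: w and h1/(q w) have the same fbar-value
   but different g-values. *)
lemma phi_curve_no_relation:
  assumes rel: "\<And>w. w \<noteq> 0 \<Longrightarrow> poly r1 (fbar h1 q w) * gg h2 w + poly r0 (fbar h1 q w) = 0"
  shows "r1 = 0" "r0 = 0"
proof -
  have r1_zero: "poly r1 (fbar h1 q w) = 0" if w: "w \<noteq> 0" "w^2 \<noteq> h1/q" for w
  proof -
    let ?w' = "h1/(q*w)"
    have w'0: "?w' \<noteq> 0" using w h1 q_nonzero by simp
    have same_fbar: "fbar h1 q ?w' = fbar h1 q w" using w h1 q_nonzero by (simp add: fbar_def field_simps)
    have "poly r1 (fbar h1 q w) * (gg h2 w - gg h2 ?w')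
        = (poly r1 (fbar h1 q w) * gg h2 w + poly r0 (fbar h1 q w))
          - (poly r1 (fbar h1 q ?w') * gg h2 ?w' + poly r0 (fbar h1 q ?w'))"
      unfolding same_fbar by (simp add: algebra_simps)
    also have "\<dots> = 0" using rel[OF w(1)] rel[OF w'0] by simp
    finally have "poly r1 (fbar h1 q w) * (gg h2 w - gg h2 ?w') = 0" .
    moreover have "gg h2 w \<noteq> gg h2 ?w'"
    proof -
      have "w \<noteq> ?w'" using w q_nonzero by (auto simp: field_simps power2_eq_square)
      moreover have "w * ?w' \<noteq> h2" using w qh q_nonzero h1 by (auto simp: field_simps q_def)
      ultimately show ?thesis using gg_eq_iff[OF w(1) w'0] by simp
    qed
    ultimately show ?thesis by simp
  qed
  show "r1 = 0" by (rule poly_zero_on_fbar) (rule r1_zero)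
  show "r0 = 0"
  proof (rule poly_zero_on_fbar)
    fix w :: complex assume "w \<noteq> 0" "w^2 \<noteq> h1/q"
    thus "poly r0 (fbar h1 q w) = 0" using rel[of w] r1_zero[of w] by simp
  qed
qed

(* The fb-polynomial multiplying g^j in bpoly e, and phi = g^2/h2 + P1 g + P0. *)
definition "column e j = [: e 0 j, e 1 j, e 2 j, e 3 j :]"
definition "P1 = [: 0, -(q/h1 + 1/h2) :]"
definition "P0 = [: -k0, 0, q/h1 :]"

lemma coeff_column: "i \<le> 3 \<Longrightarrow> coeff (column e j) i = e i j"
proof -
  assume "i \<le> 3"
  hence "i = 0 \<or> i = 1 \<or> i = 2 \<or> i = 3" by arith
  thus ?thesis unfolding column_def by (auto simp: numeral_eq_Suc)
qed

lemma bpoly_by_columns: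
  "bpoly e x y = poly (column e 0) x + poly (column e 1) x * y + poly (column e 2) x * y^2"
  unfolding bpoly_def column_def
  by (simp add: numeral_eq_Suc atMost_Suc algebra_simps power2_eq_square power3_eq_cube)

lemma phi_by_columns: "phi x y = y^2/h2 + poly P1 x * y + poly P0 x"
  unfolding phi_def phiu_def Let_def q_def[symmetric] P1_def P0_def k0_def
  using h1 h2 by (simp add: field_simps power2_eq_square)

lemma columns_on_phi_curve:
  assumes curve: "\<And>w. w \<noteq> 0 \<Longrightarrow> bpoly e (fbar h1 q w) (gg h2 w) = 0"
  shows "column e 1 = smult h2 (column e 2 * P1)" "column e 0 = smult h2 (column e 2 * P0)"
    and "bpoly e x y = h2 * poly (column e 2) x * phi x y"
proof -
  define r1 where "r1 = column e 1 - smult h2 (column e 2 * P1)"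
  define r0 where "r0 = column e 0 - smult h2 (column e 2 * P0)"
  have decomposition: "bpoly e x y = h2 * poly (column e 2) x * phi x y + poly r1 x * y + poly r0 x"
    for x y
    unfolding bpoly_by_columns phi_by_columns r1_def r0_def using h2
    by (simp add: field_simps power2_eq_square)
  have rel: "poly r1 (fbar h1 q w) * gg h2 w + poly r0 (fbar h1 q w) = 0" if "w \<noteq> 0" for w
    using curve[OF that] decomposition[of "fbar h1 q w" "gg h2 w"] phi_on_curve[OF that] by simp
  have "r1 = 0" "r0 = 0" using phi_curve_no_relation[OF rel] by simp_all
  thus "column e 1 = smult h2 (column e 2 * P1)" "column e 0 = smult h2 (column e 2 * P0)"
    "bpoly e x y = h2 * poly (column e 2) x * phi x y"
    using decomposition[of x y] unfolding r1_def r0_def by simp_all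
qed

(* Comparing fb-degrees in column 0 = h2 column 2 * P0 shows that column 2 is linear. *)
lemma column_2_linear:
  assumes curve: "\<And>w. w \<noteq> 0 \<Longrightarrow> bpoly e (fbar h1 q w) (gg h2 w) = 0"
  shows "column e 2 = [: e 0 2, e 1 2 :]"
proof -
  have "degree (column e 2) \<le> 1"
  proof (cases "column e 2 = 0")
    case False
    have P0: "degree P0 = 2" "P0 \<noteq> 0" unfolding P0_def using q_nonzero h1 by auto
    have "degree (column e 0) = degree (column e 2 * P0)"
      using columns_on_phi_curve(2)[OF curve] h2 by (simp add: degree_smult_eq)
    also have "\<dots> = degree (column e 2) + 2" using degree_mult_eq[OF False P0(2)] P0(1) by simp
    finally have "degree (column e 0) = degree (column e 2) + 2" .
    moreover have "degree (column e 0) \<le> 3" unfolding column_def by (rule degree_cubic_le)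
    ultimately show ?thesis by simp
  qed simp
  hence "e 2 2 = 0" "e 3 2 = 0"
    using coeff_eq_0[of "column e 2" 2] coeff_eq_0[of "column e 2" 3] coeff_column[of _ e 2] by simp_all
  thus ?thesis unfolding column_def by simp
qed

lemma vanishing_on_phi_curve_and_two_points:
  assumes curve: "\<And>w. w \<noteq> 0 \<Longrightarrow> bpoly e (fbar h1 q w) (gg h2 w) = 0"
    and p1: "bpoly e a' y1 = 0" "phi a' y1 \<noteq> 0" and p2: "bpoly e b' y2 = 0" "phi b' y2 \<noteq> 0"
    and ab: "a' \<noteq> b'"
  shows "\<forall>i\<le>3. \<forall>j\<le>2. e i j = 0"
proof -
  have lin: "bpoly e x y = h2 * (e 0 2 + e 1 2 * x) * phi x y" for x y
    using columns_on_phi_curve(3)[OF curve] column_2_linear[OF curve] by simp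
  have A: "e 0 2 + e 1 2 * a' = 0" and B: "e 0 2 + e 1 2 * b' = 0"
    using lin[of a' y1] lin[of b' y2] p1 p2 h2 by auto
  have "e 1 2 * (a' - b') = (e 0 2 + e 1 2 * a') - (e 0 2 + e 1 2 * b')" by (simp add: algebra_simps)
  also have "\<dots> = 0" using A B by simp
  finally have "e 1 2 = 0" using ab by simp
  moreover have "e 0 2 = 0" using A \<open>e 1 2 = 0\<close> by simp
  ultimately have "column e 2 = 0" "column e 1 = 0" "column e 0 = 0"
    using column_2_linear[OF curve] columns_on_phi_curve(1,2)[OF curve] by simp_all
  hence "column e j = 0" if "j \<le> 2" for j using that by (auto simp: le_Suc_eq numeral_eq_Suc)
  thus ?thesis using coeff_column by (metis coeff_0)
qed

end

context curve_generic
begin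

definition "base_roots = [u 1, u 2, u 3, u 4, u 5, u 6, u 7, u 8, z/q, h1/(q*z)]"

lemma pullback_multiple_of_root_poly:
  assumes "through_pts h1 h2 u z Y0 Y1 Y2 e"
  shows "\<exists>l. pullback e = smult l (root_poly base_roots)"
proof -
  have T: "\<forall>k\<in>{1..8}. bpoly e (fbar h1 q (u k)) (gg h2 (u k)) = 0"
    "bpoly e (fbar h1 q (z/q)) (gg h2 (z/q)) = 0"
    "bpoly e (fbar h1 q (h1/(q*z))) (gg h2 (h1/(q*z))) = 0"
    using assms unfolding through_pts_def Let_def q_def[symmetric] by auto
  have "\<forall>r\<in>set base_roots. r \<noteq> 0 \<and> bpoly e (fbar h1 q r) (gg h2 r) = 0"
    unfolding base_roots_def using T u_nonzero z0 q_nonzero h1 by auto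
  hence roots: "\<forall>r\<in>set base_roots. poly (pullback e) r = 0" using poly_pullback by auto
  have "degree (pullback e) \<le> 0 + length base_roots"
    using degree_pullback[of e] by (simp add: base_roots_def)
  then obtain Q where Q: "degree Q \<le> 0" "pullback e = root_poly base_roots * Q"
    using root_poly_quotient[OF roots_distinct[folded base_roots_def] roots] by blast
  obtain c where "Q = [:c:]" using Q(1) degree0_coeffs by blast
  thus ?thesis using Q(2) by (auto simp: mult.commute)
qed

lemma coef_on_phi_curve:
  assumes "w \<noteq> 0" "gg h2 w \<noteq> 0" "gg h2 w \<noteq> g1" "gg h2 w \<noteq> g2"
  shows "bpoly coef (fbar h1 q w) (gg h2 w) = Y1 * K * (fbar h1 q w - a) * (fbar h1 q w - b)
     * VV h1 h2 u (fbar h1 q w) (ff h1 z) (gg h2 w) / (gg h2 w * (gg h2 w - g1) * (gg h2 w - g2))"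
  unfolding bpoly_coef_eq[OF assms(2-4)] Ecurve_def Wnum_def phi_on_curve[OF assms(1)] by simp

lemma K_nonzero: "K \<noteq> 0"
  unfolding K_def using qh sq_z_h1 h1 h2 q_nonzero z0 by (auto simp: q_def mult.commute)

lemma coef_nonzero_on_phi_curve:
  assumes w: "w \<notin> {0, z/q, h1/z, z, h1/(q*z), h2/z, h2*z/h1}" "w \<notin> set base_roots"
    and sq: "w^2 \<noteq> -h2" "w^2 \<noteq> h2"
  shows "bpoly coef (fbar h1 q w) (gg h2 w) \<noteq> 0"
proof -
  have w0: "w \<noteq> 0" and nz: "z/q \<noteq> 0" "h1/z \<noteq> 0" using w z0 q_nonzero h1 by auto
  let ?x = "fbar h1 q w" and ?y = "gg h2 w"
  have y0: "?y \<noteq> 0"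
  proof
    assume "?y = 0"
    hence "w^2 + h2 = 0" using w0 by (simp add: gg_def field_simps power2_eq_square)
    thus False using sq(1) by (simp add: add_eq_0_iff)
  qed
  have y1: "?y \<noteq> g1" unfolding g1_def gg_eq_iff[OF w0 nz(2)] using w h1 z0 by (auto simp: field_simps)
  have y2: "?y \<noteq> g2" unfolding g2_def gg_eq_iff[OF w0 z0] using w z0 by (auto simp: field_simps)
  have xa: "?x \<noteq> a"
    unfolding a_def fbar_eq_iff[OF w0 nz(1) q_nonzero] using w z0 q_nonzero by (auto simp: field_simps)
  have xb: "?x \<noteq> b"
    unfolding b_def fbar_eq_iff[OF w0 z0 q_nonzero] using w z0 q_nonzero by (auto simp: field_simps)
  have Uw: "UU u w \<noteq> 0"
  proof
    assume "UU u w = 0"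
    then obtain i where "i \<in> {1..8}" "w = u i" unfolding UU_def by auto
    hence "w \<in> set base_roots" unfolding base_roots_def by (auto simp: numeral_eq_Suc le_Suc_eq)
    thus False using w by auto
  qed
  have quad: "h1*w^2 - h2*ff h1 z*w + h2^2 \<noteq> 0"
  proof -
    have "h1*w^2 - h2*ff h1 z*w + h2^2 = h1*(w - h2/z)*(w - h2*z/h1)"
      using h1 z0 by (simp add: ff_def field_simps; simp add: algebra_simps power2_eq_square)
    thus ?thesis using w h1 by auto
  qed
  have "VV h1 h2 u ?x (ff h1 z) ?y \<noteq> 0"
    unfolding VV_on_phi_curve[OF w0 h1 h2 q_nonzero sq(2) q_def]
    using Uw h2 qh quad sq(1) w0 by (auto simp: q_def add_eq_0_iff)
  thus ?thesis
    unfolding coef_on_phi_curve[OF w0 y0 y1 y2] using Y1 K_nonzero xa xb y0 y1 y2 by simp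
qed

(* The curve found is not phi = 0 itself, i.e. its pullback is not identically zero. *)
lemma pullback_coef_nonzero: "pullback coef \<noteq> 0"
proof -
  define bad where "bad = {0, z/q, h1/z, z, h1/(q*z), h2/z, h2*z/h1} \<union> set base_roots
                            \<union> {w. w^2 = -h2} \<union> {w. w^2 = h2}"
  have "finite bad" unfolding bad_def using finite_square_roots by simp
  then obtain w where "w \<notin> bad" using ex_new_if_finite[OF infinite_UNIV_char_0] by metis
  hence w: "w \<notin> {0, z/q, h1/z, z, h1/(q*z), h2/z, h2*z/h1}" "w \<notin> set base_roots"
    and sq: "w^2 \<noteq> -h2" "w^2 \<noteq> h2"
    unfolding bad_def by auto
  have w0: "w \<noteq> 0" using w by auto
  have "poly (pullback coef) w \<noteq> 0"
    unfolding poly_pullback[OF w0] using coef_nonzero_on_phi_curve[OF w sq] w0 q_nonzero by simp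
  thus ?thesis by auto
qed

lemma phi_off_curve_at_extra_points: "phi b yz \<noteq> 0" "phi a yq \<noteq> 0"
proof -
  show "phi b yz \<noteq> 0"
    unfolding b_def phi_on_fibre[OF z0] using yz_ne_g2 yz_equation(1) h2 by (simp add: g2_def g4_def)
  have hz: "h1/(q*(z/q)) = h1/z" using q_nonzero by simp
  have "yq \<noteq> g3" using yq_equation(2) Y0 Y1 by auto
  have zq0: "z/q \<noteq> 0" using z0 q_nonzero by simp
  show "phi a yq \<noteq> 0"
    unfolding a_def phi_on_fibre[OF zq0] hz using \<open>yq \<noteq> g3\<close> yq_equation(1) h2
    by (simp add: g1_def g3_def)
qed

lemma coef_unique:
  assumes d: "through_pts h1 h2 u z Y0 Y1 Y2 d"
  shows "bpoly_prop d coef"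
proof -
  obtain lc where lc: "pullback coef = smult lc (root_poly base_roots)"
    using pullback_multiple_of_root_poly[OF through_pts_coef] by blast
  have lc0: "lc \<noteq> 0" using pullback_coef_nonzero lc by auto
  obtain ld where ld: "pullback d = smult ld (root_poly base_roots)"
    using pullback_multiple_of_root_poly[OF d] by blast
  define e where "e = (\<lambda>i j. d i j - ld/lc * coef i j)"
  have curve: "bpoly e (fbar h1 q w) (gg h2 w) = 0" if w: "w \<noteq> 0" for w
  proof -
    have "bpoly e (fbar h1 q w) (gg h2 w) * ((q*w)^3 * w^2) = poly (pullback d) w - ld/lc * poly (pullback coef) w"
      unfolding e_def bpoly_sub_smult poly_pullback[OF w] by (simp add: algebra_simps)
    also have "\<dots> = 0" unfolding ld lc using lc0 by simp
    finally show ?thesis using w q_nonzero by simp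
  qed
  have "bpoly d a yq = 0" "bpoly d b yz = 0"
    using d unfolding through_pts_def Let_def q_def[symmetric] extra_pt_z_iff extra_pt_zq_iff
    by (simp_all add: a_def b_def)
  hence "bpoly e a yq = 0" "bpoly e b yz = 0"
    unfolding e_def bpoly_sub_smult using point_extra_z point_extra_zq by simp_all
  hence "\<forall>i\<le>3. \<forall>j\<le>2. e i j = 0"
    using vanishing_on_phi_curve_and_two_points[OF curve] phi_off_curve_at_extra_points a_ne_b by blast
  thus ?thesis unfolding bpoly_prop_def e_def by (auto intro!: exI[of _ "ld/lc"])
qed

theorem curve_characterisation:
  "\<exists>c. bpoly_nonzero c
     \<and> (\<forall>fb g. curve_dom h1 h2 u z fb g \<longrightarrow> curveE h1 h2 u z Y0 Y1 Y2 fb g = bpoly c fb g)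
     \<and> through_pts h1 h2 u z Y0 Y1 Y2 c
     \<and> (\<forall>d. through_pts h1 h2 u z Y0 Y1 Y2 d \<longrightarrow> bpoly_prop d c)"
proof (intro exI conjI allI impI)
  show "bpoly_nonzero coef"
  proof (rule ccontr)
    assume "\<not> bpoly_nonzero coef"
    hence "pullback coef = 0" unfolding bpoly_nonzero_def pullback_def by simp
    thus False using pullback_coef_nonzero by simp
  qed
  fix fb g assume dom: "curve_dom h1 h2 u z fb g"
  hence "g \<noteq> 0" "g \<noteq> g1" "g \<noteq> g2" unfolding curve_dom_def Let_def g1_def g2_def by auto
  thus "curveE h1 h2 u z Y0 Y1 Y2 fb g = bpoly coef fb g"
    using curveE_eq_Ecurve[OF dom] bpoly_coef_eq by simp
qed (use through_pts_coef coef_unique in auto)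

end

section \<open>Genericity\<close>

lemma polyfun_diff: "p \<in> polyfun \<Longrightarrow> r \<in> polyfun \<Longrightarrow> (\<lambda>xs. p xs - r xs) \<in> polyfun"
proof -
  assume "p \<in> polyfun" "r \<in> polyfun"
  hence "(\<lambda>xs. p xs + (\<lambda>xs. -1) xs * r xs) \<in> polyfun" by (intro pf_add pf_mult pf_const)
  thus ?thesis by simp
qed

definition rational_on :: "(complex list \<Rightarrow> complex) \<Rightarrow> (complex list \<Rightarrow> bool) \<Rightarrow> bool" where
  "rational_on f d \<longleftrightarrow> (\<exists>N D. N \<in> polyfun \<and> D \<in> polyfun \<and> (\<forall>xs. D xs \<noteq> 0 \<longrightarrow> f xs = N xs / D xs)
       \<and> (\<forall>xs. d xs \<longrightarrow> D xs \<noteq> 0))"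

lemma rational_onI:
  assumes "N \<in> polyfun" "D \<in> polyfun" "\<And>xs. D xs \<noteq> 0 \<Longrightarrow> f xs = N xs / D xs"
    "\<And>xs. d xs \<Longrightarrow> D xs \<noteq> 0"
  shows "rational_on f d"
  unfolding rational_on_def using assms by blast

lemma rational_on_const: "rational_on (\<lambda>xs. c) (\<lambda>xs. True)"
  by (rule rational_onI[of "\<lambda>xs. c" "\<lambda>xs. 1"]) (auto intro: pf_const)

lemma rational_on_var: "rational_on (\<lambda>xs. xs ! i) (\<lambda>xs. True)"
  by (rule rational_onI[of "\<lambda>xs. xs ! i" "\<lambda>xs. 1"]) (auto intro: pf_const pf_var)

lemma rational_on_add:
  assumes "rational_on f d1" "rational_on g d2"
  shows "rational_on (\<lambda>xs. f xs + g xs) (\<lambda>xs. d1 xs \<and> d2 xs)"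
proof -
  obtain N1 D1 where a1: "N1 \<in> polyfun" "D1 \<in> polyfun" "\<And>xs. D1 xs \<noteq> 0 \<Longrightarrow> f xs = N1 xs / D1 xs"
    "\<And>xs. d1 xs \<Longrightarrow> D1 xs \<noteq> 0"
    using assms(1) unfolding rational_on_def by blast
  obtain N2 D2 where a2: "N2 \<in> polyfun" "D2 \<in> polyfun" "\<And>xs. D2 xs \<noteq> 0 \<Longrightarrow> g xs = N2 xs / D2 xs"
    "\<And>xs. d2 xs \<Longrightarrow> D2 xs \<noteq> 0"
    using assms(2) unfolding rational_on_def by blast
  note a = a1 a2
  show ?thesis
    by (rule rational_onI[of "\<lambda>xs. N1 xs * D2 xs + N2 xs * D1 xs" "\<lambda>xs. D1 xs * D2 xs"])
      (use a in \<open>auto intro: pf_add pf_mult simp: field_simps\<close>)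
qed

lemma rational_on_diff:
  assumes "rational_on f d1" "rational_on g d2"
  shows "rational_on (\<lambda>xs. f xs - g xs) (\<lambda>xs. d1 xs \<and> d2 xs)"
proof -
  obtain N1 D1 where a1: "N1 \<in> polyfun" "D1 \<in> polyfun" "\<And>xs. D1 xs \<noteq> 0 \<Longrightarrow> f xs = N1 xs / D1 xs"
    "\<And>xs. d1 xs \<Longrightarrow> D1 xs \<noteq> 0"
    using assms(1) unfolding rational_on_def by blast
  obtain N2 D2 where a2: "N2 \<in> polyfun" "D2 \<in> polyfun" "\<And>xs. D2 xs \<noteq> 0 \<Longrightarrow> g xs = N2 xs / D2 xs"
    "\<And>xs. d2 xs \<Longrightarrow> D2 xs \<noteq> 0"
    using assms(2) unfolding rational_on_def by blast
  note a = a1 a2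
  show ?thesis
    by (rule rational_onI[of "\<lambda>xs. N1 xs * D2 xs - N2 xs * D1 xs" "\<lambda>xs. D1 xs * D2 xs"])
      (use a in \<open>auto intro: polyfun_diff pf_mult simp: field_simps\<close>)
qed

lemma rational_on_mult:
  assumes "rational_on f d1" "rational_on g d2"
  shows "rational_on (\<lambda>xs. f xs * g xs) (\<lambda>xs. d1 xs \<and> d2 xs)"
proof -
  obtain N1 D1 where a1: "N1 \<in> polyfun" "D1 \<in> polyfun" "\<And>xs. D1 xs \<noteq> 0 \<Longrightarrow> f xs = N1 xs / D1 xs"
    "\<And>xs. d1 xs \<Longrightarrow> D1 xs \<noteq> 0"
    using assms(1) unfolding rational_on_def by blast
  obtain N2 D2 where a2: "N2 \<in> polyfun" "D2 \<in> polyfun" "\<And>xs. D2 xs \<noteq> 0 \<Longrightarrow> g xs = N2 xs / D2 xs"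
    "\<And>xs. d2 xs \<Longrightarrow> D2 xs \<noteq> 0"
    using assms(2) unfolding rational_on_def by blast
  note a = a1 a2
  show ?thesis
    by (rule rational_onI[of "\<lambda>xs. N1 xs * N2 xs" "\<lambda>xs. D1 xs * D2 xs"])
      (use a in \<open>auto intro: pf_mult\<close>)
qed

lemma rational_on_div:
  assumes "rational_on f d1" "rational_on g d2"
  shows "rational_on (\<lambda>xs. f xs / g xs) (\<lambda>xs. d1 xs \<and> d2 xs \<and> g xs \<noteq> 0)"
proof -
  obtain N1 D1 where a1: "N1 \<in> polyfun" "D1 \<in> polyfun" "\<And>xs. D1 xs \<noteq> 0 \<Longrightarrow> f xs = N1 xs / D1 xs"
    "\<And>xs. d1 xs \<Longrightarrow> D1 xs \<noteq> 0"
    using assms(1) unfolding rational_on_def by blast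
  obtain N2 D2 where a2: "N2 \<in> polyfun" "D2 \<in> polyfun" "\<And>xs. D2 xs \<noteq> 0 \<Longrightarrow> g xs = N2 xs / D2 xs"
    "\<And>xs. d2 xs \<Longrightarrow> D2 xs \<noteq> 0"
    using assms(2) unfolding rational_on_def by blast
  note a = a1 a2
  show ?thesis
  proof (rule rational_onI[of "\<lambda>xs. N1 xs * D2 xs * D2 xs" "\<lambda>xs. D1 xs * N2 xs * D2 xs"])
    fix xs assume "D1 xs * N2 xs * D2 xs \<noteq> 0"
    hence nz: "D1 xs \<noteq> 0" "N2 xs \<noteq> 0" "D2 xs \<noteq> 0" by auto
    hence "f xs / g xs = (N1 xs / D1 xs) / (N2 xs / D2 xs)" using a(3,7) by simp
    thus "f xs / g xs = N1 xs * D2 xs * D2 xs / (D1 xs * N2 xs * D2 xs)" using nz by (simp add: field_simps)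
  next
    fix xs assume d: "d1 xs \<and> d2 xs \<and> g xs \<noteq> 0"
    hence "D1 xs \<noteq> 0" "D2 xs \<noteq> 0" using a(4,8) by auto
    moreover have "N2 xs \<noteq> 0" using d a(7) \<open>D2 xs \<noteq> 0\<close> by auto
    ultimately show "D1 xs * N2 xs * D2 xs \<noteq> 0" by simp
  qed (use a in \<open>auto intro: pf_mult\<close>)
qed

lemma rational_on_power: "rational_on f d \<Longrightarrow> rational_on (\<lambda>xs. f xs ^ n) d"
proof (induction n)
  case 0 show ?case by (rule rational_onI[of "\<lambda>xs. 1" "\<lambda>xs. 1"]) (auto intro: pf_const)
next
  case (Suc n)
  have "rational_on (\<lambda>xs. f xs * f xs ^ n) (\<lambda>xs. d xs \<and> d xs)"
    by (rule rational_on_mult[OF Suc.prems Suc.IH[OF Suc.prems]])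
  thus ?case by simp
qed

lemma rational_on_minus: "rational_on f d \<Longrightarrow> rational_on (\<lambda>xs. - f xs) (\<lambda>xs. True \<and> d xs)"
  using rational_on_diff[OF rational_on_const[of 0]] by simp

lemmas rational_on_intros = rational_on_add rational_on_diff rational_on_mult rational_on_div
  rational_on_power rational_on_minus rational_on_var rational_on_const

lemma rational_on_nonzero_generically:
  assumes "rational_on f d" "d x0" "f x0 \<noteq> 0"
  shows "\<exists>p\<in>polyfun. p x0 \<noteq> 0 \<and> (\<forall>xs. p xs \<noteq> 0 \<longrightarrow> f xs \<noteq> 0)"
proof -
  obtain N D where N: "N \<in> polyfun" "D \<in> polyfun" and E: "\<And>xs. D xs \<noteq> 0 \<Longrightarrow> f xs = N xs / D xs"
    and Dd: "\<And>xs. d xs \<Longrightarrow> D xs \<noteq> 0"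
    using assms(1) unfolding rational_on_def by blast
  have "D x0 \<noteq> 0" using Dd assms(2) by blast
  moreover have "N x0 \<noteq> 0" using E \<open>D x0 \<noteq> 0\<close> assms(3) by auto
  ultimately show ?thesis
  proof (intro bexI[of _ "\<lambda>xs. N xs * D xs"] conjI allI impI)
    fix xs assume "N xs * D xs \<noteq> 0"
    thus "f xs \<noteq> 0" using E by auto
  qed (simp_all add: pf_mult[OF N])
qed

(* The product of all quantities required to be nonzero by the locale curve_generic; the last
   factor is the Vandermonde-type product expressing that the ten base roots are distinct. *)
definition nondegeneracy :: "complex \<Rightarrow> complex \<Rightarrow> (nat \<Rightarrow> complex) \<Rightarrow> complex \<Rightarrow> complex \<Rightarrow> complex \<Rightarrow> complex
     \<Rightarrow> complex" where
  "nondegeneracy h1 h2 u z Y0 Y1 Y2 = (let q = qq h1 h2 u; g1 = gg h2 (h1/z); g2 = gg h2 z; g3 = gg h2 (z/q);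
     g4 = gg h2 (h1/(q*z)); a = fbar h1 q (z/q); b = fbar h1 q z;
     Mz = q^4*z^8/h1^4 * (UU u (h1/(q*z)) / UU u z);
     Mq = q^4*(z/q)^8/h1^4 * (UU u (h1/(q*(z/q))) / UU u (z/q));
     yz = (Mz*g2 - Y1/Y2*g4)/(Mz - Y1/Y2); yq = (Mq*g3 - Y0/Y1*g1)/(Mq - Y0/Y1) in
   h1*h2*z*Y0*Y1*Y2*(\<Prod>i=1..8. u i) * (q*h2 - h1) * (z^2 - h1*q) * (q*z^2 - h1)
   * UU u (z/q) * UU u (h1/(q*z)) * g1 * g2 * (g1 - g2) * ((h1/z)^2 - h2) * (z^2 - h2)
   * (\<Prod>i=1..8. gg h2 (u i) * (gg h2 (u i) - g1) * (gg h2 (u i) - g2) * ((u i)^2 - h2))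
   * g3*(g3-g1)*(g3-g2)*g4*(g4-g1)*(g4-g2)*UU u z * UU u (h1/z)
   * (Mz - Y1/Y2) * yz * (yz - g1) * (Mq - Y0/Y1) * yq * (yq - g2)
   * (a - b) * (g2 - g4) * (z^2 - h1) * ((u 1 - u 2) * (u 1 - u 3) * (u 1 - u 4) * (u 1 - u 5)
   * (u 1 - u 6) * (u 1 - u 7) * (u 1 - u 8) * (u 1 - z/q) * (u 1 - h1/(q*z)) * (u 2 - u 3)
   * (u 2 - u 4) * (u 2 - u 5) * (u 2 - u 6) * (u 2 - u 7) * (u 2 - u 8) * (u 2 - z/q)
   * (u 2 - h1/(q*z)) * (u 3 - u 4) * (u 3 - u 5) * (u 3 - u 6) * (u 3 - u 7) * (u 3 - u 8)
   * (u 3 - z/q) * (u 3 - h1/(q*z)) * (u 4 - u 5) * (u 4 - u 6) * (u 4 - u 7) * (u 4 - u 8)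
   * (u 4 - z/q) * (u 4 - h1/(q*z)) * (u 5 - u 6) * (u 5 - u 7) * (u 5 - u 8) * (u 5 - z/q)
   * (u 5 - h1/(q*z)) * (u 6 - u 7) * (u 6 - u 8) * (u 6 - z/q) * (u 6 - h1/(q*z))
   * (u 7 - u 8) * (u 7 - z/q) * (u 7 - h1/(q*z)) * (u 8 - z/q) * (u 8 - h1/(q*z))
   * (z/q - h1/(q*z))))"

lemma nondegeneracy_imp_curve_generic:
  assumes "nondegeneracy h1 h2 u z Y0 Y1 Y2 \<noteq> 0"
  shows "curve_generic h1 h2 u z Y0 Y1 Y2"
proof -
  have not_bex: "(\<not>(\<exists>x\<in>A. P x)) = (\<forall>x\<in>A. \<not> P x)" for A P by blast
  note c = assms[unfolded nondegeneracy_def Let_def mult_eq_0_iff de_Morgan_disj right_minus_eq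
      prod_zero_iff[OF finite_atLeastAtMost] not_bex]
  have base: "curve_setting h1 h2 u z Y0 Y1 Y2"
    by unfold_locales (use c in blast)+
  interpret curve_setting h1 h2 u z Y0 Y1 Y2 by (rule base)
  show ?thesis
  proof (intro curve_generic.intro base)
    have "distinct [u 1, u 2, u 3, u 4, u 5, u 6, u 7, u 8, z/q, h1/(q*z)]"
      unfolding q_def using c by simp
    thus "curve_generic_axioms h1 h2 u z Y0 Y1 Y2"
      unfolding curve_generic_axioms_def g1_def g2_def g3_def g4_def Mz_def Mq_def yz_def yq_def
        a_def b_def q_def
      using c by blast
  qed
qed

lemma curve_characterisation_generic:
  assumes "nondegeneracy h1 h2 u z Y0 Y1 Y2 \<noteq> 0"
  shows "\<exists>c. bpoly_nonzero c
     \<and> (\<forall>fb g. curve_dom h1 h2 u z fb g \<longrightarrow> curveE h1 h2 u z Y0 Y1 Y2 fb g = bpoly c fb g)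
     \<and> through_pts h1 h2 u z Y0 Y1 Y2 c
     \<and> (\<forall>d. through_pts h1 h2 u z Y0 Y1 Y2 d \<longrightarrow> bpoly_prop d c)"
proof -
  interpret curve_generic h1 h2 u z Y0 Y1 Y2
    using assms by (rule nondegeneracy_imp_curve_generic)
  show ?thesis by (rule curve_characterisation)
qed

lemma prod_1_8: "(\<Prod>i=1..8::nat. f i) = f 1 * f 2 * f 3 * f 4 * f 5 * f 6 * f 7 * (f 8::complex)"
  by (simp add: numeral_eq_Suc atLeastAtMostSuc_conv mult_ac)

definition nondegeneracy_list :: "complex list \<Rightarrow> complex" where
  "nondegeneracy_list xs = nondegeneracy (xs!0) (xs!1) (\<lambda>i. xs!(Suc i)) (xs!10) (xs!11) (xs!12) (xs!13)"

schematic_goal nondegeneracy_list_rational: "rational_on nondegeneracy_list ?d"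
  unfolding nondegeneracy_list_def[abs_def] nondegeneracy_def Let_def qq_def UU_def prod_1_8 gg_def fbar_def
  by (rule rational_on_intros)+

definition "witness_params = [2, 3, 1, -1, 2, -2, 3, -3, 4, -1/8, 5, 1, 2, 3::complex]"

lemma nondegeneracy_witness: "nondegeneracy_list witness_params \<noteq> 0"
  unfolding nondegeneracy_list_def witness_params_def nondegeneracy_def Let_def qq_def UU_def prod_1_8
    gg_def fbar_def
  by (simp add: nth_Cons' eval_nat_numeral)

lemma nondegeneracy_cong:
  assumes "\<And>i. i \<in> {1..8} \<Longrightarrow> v i = u i"
  shows "nondegeneracy h1 h2 v z Y0 Y1 Y2 = nondegeneracy h1 h2 u z Y0 Y1 Y2"
  unfolding nondegeneracy_def Let_def qq_def UU_def prod_1_8 using assms by simp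

lemma nondegeneracy_at_list:
  "nondegeneracy_list [h1, h2, u 1, u 2, u 3, u 4, u 5, u 6, u 7, u 8, z, Y0, Y1, Y2]
     = nondegeneracy h1 h2 u z Y0 Y1 Y2"
proof -
  have "[h1, h2, u 1, u 2, u 3, u 4, u 5, u 6, u 7, u 8, z, Y0, Y1, Y2] ! Suc i = u i"
    if "i \<in> {1..8}" for i
  proof -
    have "i = 1 \<or> i = 2 \<or> i = 3 \<or> i = 4 \<or> i = 5 \<or> i = 6 \<or> i = 7 \<or> i = 8" using that by auto
    thus ?thesis by (auto simp: numeral_eq_Suc)
  qed
  thus ?thesis
    unfolding nondegeneracy_list_def
    using nondegeneracy_cong[of "\<lambda>i. [h1, h2, u 1, u 2, u 3, u 4, u 5, u 6, u 7, u 8, z, Y0, Y1, Y2] ! Suc i" u]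
    by (simp add: numeral_eq_Suc)
qed

theorem lemma2:
  "\<exists>p\<in>polyfun. (\<exists>xs. length xs = 14 \<and> p xs \<noteq> 0) \<and>
     (\<forall>(h1::complex) (h2::complex) (u::nat \<Rightarrow> complex) (z::complex) (Y0::complex) (Y1::complex) (Y2::complex).
        p [h1, h2, u 1, u 2, u 3, u 4, u 5, u 6, u 7, u 8, z, Y0, Y1, Y2] \<noteq> 0 \<longrightarrow>
        (\<exists>c. bpoly_nonzero c
             \<and> (\<forall>fb g. curve_dom h1 h2 u z fb g \<longrightarrow> curveE h1 h2 u z Y0 Y1 Y2 fb g = bpoly c fb g)
             \<and> through_pts h1 h2 u z Y0 Y1 Y2 c
             \<and> (\<forall>d. through_pts h1 h2 u z Y0 Y1 Y2 d \<longrightarrow> bpoly_prop d c)))"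
proof -
  have "\<exists>p\<in>polyfun. p witness_params \<noteq> 0 \<and> (\<forall>xs. p xs \<noteq> 0 \<longrightarrow> nondegeneracy_list xs \<noteq> 0)"
    by (rule rational_on_nonzero_generically[OF nondegeneracy_list_rational _ nondegeneracy_witness])
      (simp add: witness_params_def nth_Cons' eval_nat_numeral)
  then obtain p where p: "p \<in> polyfun" "p witness_params \<noteq> 0"
    "\<And>xs. p xs \<noteq> 0 \<Longrightarrow> nondegeneracy_list xs \<noteq> 0" by blast
  show ?thesis
  proof (rule bexI[OF _ p(1)], intro conjI allI impI curve_characterisation_generic)
    show "\<exists>xs. length xs = 14 \<and> p xs \<noteq> 0"
      using p(2) by (intro exI[of _ witness_params]) (simp add: witness_params_def)
  next
    fix h1 h2 :: complex and u :: "nat \<Rightarrow> complex" and z Y0 Y1 Y2 :: complex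
    assume "p [h1, h2, u 1, u 2, u 3, u 4, u 5, u 6, u 7, u 8, z, Y0, Y1, Y2] \<noteq> 0"
    thus "nondegeneracy h1 h2 u z Y0 Y1 Y2 \<noteq> 0" using p(3) nondegeneracy_at_list by metis
  qed
qed

end
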